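(* Let $K:X\times X\to\mathbb{C}$ be positive definite and assume $\delta_x\in\mathscr{H}(K)$ for all $x\in X$. Then a function $h$ on $X$ belongs to $\mathscr{H}(K)$ if and only if $\sup_F\|K_F^{-1/2}h_F\|_{\ell^2(F)}<\infty$, the supremum over all finite subsets $F\subset X$, where $h_F=h|_F$ and $K_F=(K(x,y))_{x,y\in F}$. If $h\in\mathscr{H}(K)$, then $\|h\|^2_{\mathscr{H}(K)}=\sup_F\|K_F^{-1/2}h_F\|^2_{\ell^2(F)}$.
   Context: $\delta_x$ is the function on $X$ equal to $1$ at $x$ and $0$ elsewhere; $\mathscr{H}(K)$ is the reproducing kernel Hilbert space of $K$ (completion of span of $K(\cdot,x)$, $\langle K(\cdot,x),K(\cdot,y)\rangle=K(x,y)$, $\langle K(\cdot,x),h\rangle=h(x)$). Under the assumption, each $K_F$ is a positive invertible matrix and $K_F^{-1/2}$ is defined by the spectral theorem. *)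

theory Defs
  imports "HOL-Analysis.Analysis"
begin

definition qform :: "('a \<Rightarrow> 'a \<Rightarrow> complex) \<Rightarrow> 'a set \<Rightarrow> ('a \<Rightarrow> complex) \<Rightarrow> complex" where
  "qform A F c = (\<Sum>x\<in>F. \<Sum>y\<in>F. cnj (c x) * c y * A x y)"

definition pos_def_kernel :: "('a \<Rightarrow> 'a \<Rightarrow> complex) \<Rightarrow> bool" where
  "pos_def_kernel K \<longleftrightarrow>
     (\<forall>F c. finite F \<longrightarrow> Im (qform K F c) = 0 \<and> Re (qform K F c) \<ge> 0)"

text \<open>Elements of span{K(.,x)} are represented by finitely supported
  coefficient functions c; the represented function is
  y \<mapsto> sum_x c x * K y x, and its squared norm is qform K (support) c,
  since <K(.,x),K(.,y)> = K(x,y).\<close>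
definition fin_supp :: "('a \<Rightarrow> complex) \<Rightarrow> bool" where
  "fin_supp c \<longleftrightarrow> finite {x. c x \<noteq> 0}"

definition span_fun :: "('a \<Rightarrow> 'a \<Rightarrow> complex) \<Rightarrow> ('a \<Rightarrow> complex) \<Rightarrow> 'a \<Rightarrow> complex" where
  "span_fun K c = (\<lambda>y. \<Sum>x\<in>{x. c x \<noteq> 0}. c x * K y x)"

definition span_norm2 :: "('a \<Rightarrow> 'a \<Rightarrow> complex) \<Rightarrow> ('a \<Rightarrow> complex) \<Rightarrow> real" where
  "span_norm2 K c = Re (qform K {x. c x \<noteq> 0} c)"

text \<open>A sequence in the span that is Cauchy in the kernel norm and converges
  pointwise to h (completion of the span realised as functions on X).\<close>
definition approx_seq :: "('a \<Rightarrow> 'a \<Rightarrow> complex) \<Rightarrow> (nat \<Rightarrow> 'a \<Rightarrow> complex) \<Rightarrow> ('a \<Rightarrow> complex) \<Rightarrow> bool" where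
  "approx_seq K c h \<longleftrightarrow>
     (\<forall>n. fin_supp (c n)) \<and>
     (\<forall>e>0. \<exists>N. \<forall>m\<ge>N. \<forall>n\<ge>N. span_norm2 K (\<lambda>x. c m x - c n x) < e) \<and>
     (\<forall>y. (\<lambda>n. span_fun K (c n) y) \<longlonglongrightarrow> h y)"

definition in_rkhs :: "('a \<Rightarrow> 'a \<Rightarrow> complex) \<Rightarrow> ('a \<Rightarrow> complex) \<Rightarrow> bool" where
  "in_rkhs K h \<longleftrightarrow> (\<exists>c. approx_seq K c h)"

text \<open>The RKHS norm: limit of the norms of an approximating sequence
  (independent of the chosen sequence).\<close>
definition rkhs_norm :: "('a \<Rightarrow> 'a \<Rightarrow> complex) \<Rightarrow> ('a \<Rightarrow> complex) \<Rightarrow> real" where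
  "rkhs_norm K h = lim (\<lambda>n. sqrt (span_norm2 K ((SOME c. approx_seq K c h) n)))"

definition delta :: "'a \<Rightarrow> 'a \<Rightarrow> complex" where
  "delta x = (\<lambda>y. if y = x then 1 else 0)"

definition mat_mult_on :: "'a set \<Rightarrow> ('a \<Rightarrow> 'a \<Rightarrow> complex) \<Rightarrow> ('a \<Rightarrow> 'a \<Rightarrow> complex) \<Rightarrow> 'a \<Rightarrow> 'a \<Rightarrow> complex" where
  "mat_mult_on F A B = (\<lambda>x y. \<Sum>z\<in>F. A x z * B z y)"

definition mat_vec_on :: "'a set \<Rightarrow> ('a \<Rightarrow> 'a \<Rightarrow> complex) \<Rightarrow> ('a \<Rightarrow> complex) \<Rightarrow> 'a \<Rightarrow> complex" where
  "mat_vec_on F A v = (\<lambda>x. \<Sum>y\<in>F. A x y * v y)"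

definition psd_on :: "'a set \<Rightarrow> ('a \<Rightarrow> 'a \<Rightarrow> complex) \<Rightarrow> bool" where
  "psd_on F B \<longleftrightarrow> (\<forall>x\<in>F. \<forall>y\<in>F. B x y = cnj (B y x)) \<and>
     (\<forall>c. Im (qform B F c) = 0 \<and> Re (qform B F c) \<ge> 0)"

text \<open>K_F^{-1/2}: the unique positive semidefinite F\<times>F matrix B with
  B B K_F = I, i.e. the positive square root of K_F^{-1} (spectral theorem).\<close>
definition inv_sqrt_on :: "('a \<Rightarrow> 'a \<Rightarrow> complex) \<Rightarrow> 'a set \<Rightarrow> 'a \<Rightarrow> 'a \<Rightarrow> complex" where
  "inv_sqrt_on K F = (THE B. (\<forall>x y. (x \<notin> F \<or> y \<notin> F) \<longrightarrow> B x y = 0) \<and> psd_on F B \<and>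
      (\<forall>x\<in>F. \<forall>y\<in>F. mat_mult_on F (mat_mult_on F B B) K x y = (if x = y then 1 else 0)))"

definition l2_norm_on :: "'a set \<Rightarrow> ('a \<Rightarrow> complex) \<Rightarrow> real" where
  "l2_norm_on F v = sqrt (\<Sum>x\<in>F. (cmod (v x))\<^sup>2)"

end

(*
  For finite F, the hypothesis delta_x in H(K) makes the Gram matrix K_F injective, so
  K_F^(-1/2) exists; it is built from an eigenbasis of K_F, obtained by repeatedly
  maximising the Rayleigh quotient.

  The coefficients K_F^(-1) h_F describe the element of span {K(.,x) | x in F} that agrees
  with h on F. It is the interpolant of least norm, and its squared norm is
  <h_F, K_F^(-1) h_F> = |K_F^(-1/2) h_F|^2, which increases with F. The span functions
  approximating an h in H(K) interpolate h on F up to a small error, which bounds these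
  quantities by |h|^2 and, comparing with interpolants on the supports, shows that |h|^2 is
  their supremum. Conversely, if they are bounded, the minimal interpolants along a chain of
  finite sets approaching the supremum form a Cauchy sequence, because the squared distance
  between two of them is the difference of their squared norms; the reproducing property
  makes them converge pointwise to h.
*)

theory Submission
  imports Defs
begin

section \<open>Sesquilinear forms and matrices on a finite index set\<close>

definition sesq :: "('a \<Rightarrow> 'a \<Rightarrow> complex) \<Rightarrow> 'a set \<Rightarrow> ('a \<Rightarrow> complex) \<Rightarrow> ('a \<Rightarrow> complex) \<Rightarrow> complex" where
  "sesq M F x y = (\<Sum>a\<in>F. \<Sum>b\<in>F. cnj (x a) * y b * M a b)"

definition hermitian_on :: "'a set \<Rightarrow> ('a \<Rightarrow> 'a \<Rightarrow> complex) \<Rightarrow> bool" where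
  "hermitian_on F M \<longleftrightarrow> (\<forall>a\<in>F. \<forall>b\<in>F. M a b = cnj (M b a))"

definition inner_on :: "'a set \<Rightarrow> ('a \<Rightarrow> complex) \<Rightarrow> ('a \<Rightarrow> complex) \<Rightarrow> complex" where
  "inner_on F x y = (\<Sum>a\<in>F. cnj (x a) * y a)"

definition norm2_on :: "'a set \<Rightarrow> ('a \<Rightarrow> complex) \<Rightarrow> real" where
  "norm2_on F x = (\<Sum>a\<in>F. (cmod (x a))\<^sup>2)"

lemma cnj_mult_self: "cnj z * z = complex_of_real ((cmod z)\<^sup>2)"
  by (metis complex_norm_square mult.commute of_real_power)

lemma qform_eq_sesq: "qform M F c = sesq M F c c"
  by (simp add: qform_def sesq_def)

lemma sesq_eq_inner_on: "sesq M F x y = inner_on F x (mat_vec_on F M y)"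
  by (simp add: sesq_def inner_on_def mat_vec_on_def sum_distrib_left mult_ac)

lemma sesq_commute:
  assumes "hermitian_on F M"
  shows "sesq M F y x = cnj (sesq M F x y)"
proof -
  have "sesq M F y x = (\<Sum>b\<in>F. \<Sum>a\<in>F. cnj (y a) * x b * M a b)"
    unfolding sesq_def by (rule sum.swap)
  also have "\<dots> = (\<Sum>b\<in>F. \<Sum>a\<in>F. cnj (cnj (x b) * y a * M b a))"
  proof (intro sum.cong refl)
    fix a b
    assume "a \<in> F" "b \<in> F"
    then have "M a b = cnj (M b a)"
      using assms unfolding hermitian_on_def by blast
    then show "cnj (y a) * x b * M a b = cnj (cnj (x b) * y a * M b a)"
      by simp
  qed
  finally show ?thesis
    by (simp add: sesq_def)
qed

lemma sesq_add_right: "sesq M F x (\<lambda>a. y a + \<alpha> * z a) = sesq M F x y + \<alpha> * sesq M F x z"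
  by (simp add: sesq_def algebra_simps sum.distrib sum_distrib_left)

lemma sesq_add_left: "sesq M F (\<lambda>a. y a + \<alpha> * z a) x = sesq M F y x + cnj \<alpha> * sesq M F z x"
  by (simp add: sesq_def algebra_simps sum.distrib sum_distrib_left)

lemma sesq_diff_right: "sesq M F x (\<lambda>a. y a - z a) = sesq M F x y - sesq M F x z"
  by (simp add: sesq_def algebra_simps sum_subtractf)

lemma sesq_diff_left: "sesq M F (\<lambda>a. y a - z a) x = sesq M F y x - sesq M F z x"
  by (simp add: sesq_def algebra_simps sum_subtractf)

lemma sesq_scale_right: "sesq M F x (\<lambda>a. \<alpha> * z a) = \<alpha> * sesq M F x z"
  by (simp add: sesq_def algebra_simps sum_distrib_left)

lemma sesq_scale_left: "sesq M F (\<lambda>a. \<alpha> * z a) x = cnj \<alpha> * sesq M F z x"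
  by (simp add: sesq_def algebra_simps sum_distrib_left)

lemma inner_on_cong:
  "(\<And>a. a \<in> F \<Longrightarrow> x a = x' a) \<Longrightarrow> (\<And>a. a \<in> F \<Longrightarrow> y a = y' a) \<Longrightarrow> inner_on F x y = inner_on F x' y'"
  by (simp add: inner_on_def)

lemma inner_on_commute: "inner_on F y x = cnj (inner_on F x y)"
  by (simp add: inner_on_def mult.commute)

lemma inner_on_self: "inner_on F x x = complex_of_real (norm2_on F x)"
  by (simp add: inner_on_def norm2_on_def cnj_mult_self)

lemma inner_on_add_right: "inner_on F x (\<lambda>a. y a + \<alpha> * z a) = inner_on F x y + \<alpha> * inner_on F x z"
  by (simp add: inner_on_def algebra_simps sum.distrib sum_distrib_left)

lemma inner_on_diff_right: "inner_on F x (\<lambda>a. y a - z a) = inner_on F x y - inner_on F x z"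
  by (simp add: inner_on_def algebra_simps sum_subtractf)

lemma inner_on_diff_left: "inner_on F (\<lambda>a. y a - z a) x = inner_on F y x - inner_on F z x"
  by (simp add: inner_on_def algebra_simps sum_subtractf)

lemma inner_on_scale_right: "inner_on F x (\<lambda>a. \<alpha> * z a) = \<alpha> * inner_on F x z"
  by (simp add: inner_on_def algebra_simps sum_distrib_left)

lemma inner_on_scale_left: "inner_on F (\<lambda>a. \<alpha> * z a) x = cnj \<alpha> * inner_on F z x"
  by (simp add: inner_on_def algebra_simps sum_distrib_left)

lemma inner_on_sum_right:
  "inner_on F x (\<lambda>a. \<Sum>i\<in>I. f i * y i a) = (\<Sum>i\<in>I. f i * inner_on F x (y i))"
  unfolding inner_on_def by (simp add: sum_distrib_left mult_ac) (rule sum.swap)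

lemma inner_on_delta_left:
  assumes "finite F" "a \<in> F"
  shows "inner_on F (delta a) y = y a"
proof -
  have "inner_on F (delta a) y = (\<Sum>b\<in>F. if b = a then y b else 0)"
    unfolding inner_on_def by (rule sum.cong) (auto simp: delta_def)
  then show ?thesis
    using assms by simp
qed

lemma inner_on_delta_right:
  assumes "finite F" "a \<in> F"
  shows "inner_on F x (delta a) = cnj (x a)"
  using inner_on_delta_left[OF assms, of x] inner_on_commute[of F x "delta a"] by simp

lemma sesq_delta_left: "finite F \<Longrightarrow> a \<in> F \<Longrightarrow> sesq M F (delta a) y = mat_vec_on F M y a"
  unfolding sesq_eq_inner_on by (rule inner_on_delta_left)

lemma sesq_mono_set:
  assumes "finite S" "T \<subseteq> S" "\<And>a. a \<notin> T \<Longrightarrow> x a = 0" "\<And>a. a \<notin> T \<Longrightarrow> y a = 0"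
  shows "sesq M S x y = sesq M T x y"
proof -
  have "sesq M S x y = (\<Sum>a\<in>S. \<Sum>b\<in>T. cnj (x a) * y b * M a b)"
    unfolding sesq_def by (rule sum.cong[OF refl], rule sum.mono_neutral_right) (use assms in auto)
  also have "\<dots> = sesq M T x y"
    unfolding sesq_def by (rule sum.mono_neutral_right) (use assms in auto)
  finally show ?thesis .
qed

lemma norm2_on_nonneg: "0 \<le> norm2_on F x"
  by (simp add: norm2_on_def sum_nonneg)

lemma norm2_on_eq_0: "finite F \<Longrightarrow> norm2_on F x = 0 \<Longrightarrow> a \<in> F \<Longrightarrow> x a = 0"
  by (simp add: norm2_on_def sum_nonneg_eq_0_iff)

lemma norm2_on_scale: "norm2_on F (\<lambda>a. c * x a) = (cmod c)\<^sup>2 * norm2_on F x"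
  by (simp add: norm2_on_def norm_mult power_mult_distrib sum_distrib_left)

lemma norm2_on_normalize:
  assumes "0 < norm2_on F x"
  shows "norm2_on F (\<lambda>a. complex_of_real (1 / sqrt (norm2_on F x)) * x a) = 1"
  unfolding norm2_on_scale using assms by (simp add: norm_divide power_divide)

lemma norm2_on_delta:
  assumes "finite F" "a \<in> F"
  shows "norm2_on F (delta a) = 1"
proof -
  have "norm2_on F (delta a) = (\<Sum>b\<in>F. if b = a then 1 else 0)"
    unfolding norm2_on_def by (rule sum.cong) (auto simp: delta_def)
  then show ?thesis
    using assms by simp
qed

lemma mat_vec_on_mult: "mat_vec_on F X (mat_vec_on F Y v) = mat_vec_on F (mat_mult_on F X Y) v"
  unfolding mat_vec_on_def mat_mult_on_def
  by (rule ext) (simp add: sum_distrib_left sum_distrib_right mult_ac, rule sum.swap)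

lemma mat_mult_on_assoc:
  "mat_mult_on F (mat_mult_on F X Y) Z a b = mat_mult_on F X (mat_mult_on F Y Z) a b"
  unfolding mat_mult_on_def by (simp add: sum_distrib_left sum_distrib_right mult_ac) (rule sum.swap)

lemma mat_mult_on_id_right:
  assumes "finite F" "\<forall>a\<in>F. \<forall>b\<in>F. I a b = (if a = b then 1 else 0)" "b \<in> F"
  shows "mat_mult_on F X I a b = X a b"
proof -
  have "mat_mult_on F X I a b = (\<Sum>c\<in>F. if c = b then X a c else 0)"
    unfolding mat_mult_on_def using assms(2,3) by (intro sum.cong) auto
  then show ?thesis
    using assms(1,3) by simp
qed

lemma mat_mult_on_id_left:
  assumes "finite F" "\<forall>a\<in>F. \<forall>b\<in>F. I a b = (if a = b then 1 else 0)" "a \<in> F"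
  shows "mat_mult_on F I X a b = X a b"
proof -
  have "mat_mult_on F I X a b = (\<Sum>c\<in>F. if c = a then X c b else 0)"
    unfolding mat_mult_on_def using assms(2,3) by (intro sum.cong) auto
  then show ?thesis
    using assms(1,3) by simp
qed

lemma mat_mult_on_hermitian_cnj:
  assumes "hermitian_on F X" "hermitian_on F Y" "a \<in> F" "b \<in> F"
  shows "mat_mult_on F X Y a b = cnj (mat_mult_on F Y X b a)"
  unfolding mat_mult_on_def
proof (simp, rule sum.cong[OF refl])
  fix c
  assume "c \<in> F"
  then have "X a c = cnj (X c a)" "Y c b = cnj (Y b c)"
    using assms unfolding hermitian_on_def by blast+
  then show "X a c * Y c b = cnj (Y b c) * cnj (X c a)"
    by (simp add: mult.commute)
qed

lemma inner_on_mat_vec_hermitian: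
  assumes "hermitian_on F M"
  shows "inner_on F (mat_vec_on F M x) y = inner_on F x (mat_vec_on F M y)"
proof -
  have "inner_on F (mat_vec_on F M x) y = cnj (sesq M F y x)"
    by (simp add: sesq_eq_inner_on inner_on_commute[of F "mat_vec_on F M x"])
  also have "\<dots> = sesq M F x y"
    using sesq_commute[OF assms, of x y] by simp
  finally show ?thesis
    by (simp add: sesq_eq_inner_on)
qed

lemma mat_vec_on_shift:
  assumes "finite F" "a \<in> F"
  shows "mat_vec_on F (\<lambda>a b. (if a = b then c else 0) - A a b) v a = c * v a - mat_vec_on F A v a"
proof -
  have "mat_vec_on F (\<lambda>a b. (if a = b then c else 0) - A a b) v a
      = (\<Sum>b\<in>F. (if a = b then c else 0) * v b) - mat_vec_on F A v a"
    unfolding mat_vec_on_def by (simp add: left_diff_distrib sum_subtractf)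
  also have "(\<Sum>b\<in>F. (if a = b then c else 0) * v b) = (\<Sum>b\<in>F. if a = b then c * v b else 0)"
    by (rule sum.cong) auto
  finally show ?thesis
    using assms by simp
qed

lemma hermitian_on_shift:
  assumes "hermitian_on F A"
  shows "hermitian_on F (\<lambda>a b. (if a = b then complex_of_real lam else 0) - A a b)"
  unfolding hermitian_on_def
proof (intro ballI)
  fix a b
  assume "a \<in> F" "b \<in> F"
  then have "A a b = cnj (A b a)"
    using assms unfolding hermitian_on_def by blast
  then show "(if a = b then complex_of_real lam else 0) - A a b
      = cnj ((if b = a then complex_of_real lam else 0) - A b a)"
    by simp
qed

lemma psd_on_hermitian: "psd_on F B \<Longrightarrow> hermitian_on F B"
  unfolding psd_on_def hermitian_on_def by blast

lemma psd_on_nonneg: "psd_on F B \<Longrightarrow> 0 \<le> Re (sesq B F x x)"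
  unfolding psd_on_def qform_eq_sesq by blast

lemma quadratic_nonneg_discriminant:
  fixes A B D :: real
  assumes nonneg: "\<And>t. 0 \<le> A + 2 * t * B + t\<^sup>2 * D" and "0 \<le> D"
  shows "B\<^sup>2 \<le> A * D"
proof (cases "D = 0")
  case True
  have "B = 0"
  proof (rule ccontr)
    assume "B \<noteq> 0"
    have "0 \<le> A + 2 * (-(A + 1) / (2 * B)) * B + (-(A + 1) / (2 * B))\<^sup>2 * D"
      by (rule nonneg)
    also have "\<dots> = -1"
      using True \<open>B \<noteq> 0\<close> by (simp add: field_simps)
    finally show False
      by simp
  qed
  then show ?thesis
    using True by simp
next
  case False
  then have "D > 0"
    using \<open>0 \<le> D\<close> by simp
  have "0 \<le> A + 2 * (-B / D) * B + (-B / D)\<^sup>2 * D"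
    by (rule nonneg)
  also have "\<dots> = A - B\<^sup>2 / D"
    using \<open>D > 0\<close> by (simp add: field_simps power2_eq_square)
  finally show ?thesis
    using \<open>D > 0\<close> by (simp add: field_simps mult.commute)
qed

lemma re_sesq_add_self:
  assumes "hermitian_on F M"
  shows "Re (sesq M F (\<lambda>a. c a + \<alpha> * d a) (\<lambda>a. c a + \<alpha> * d a))
    = Re (sesq M F c c) + 2 * Re (\<alpha> * sesq M F c d) + (cmod \<alpha>)\<^sup>2 * Re (sesq M F d d)"
proof -
  have "sesq M F (\<lambda>a. c a + \<alpha> * d a) (\<lambda>a. c a + \<alpha> * d a)
      = sesq M F c c + \<alpha> * sesq M F c d + cnj \<alpha> * (cnj (sesq M F c d) + \<alpha> * sesq M F d d)"
    by (simp only: sesq_add_left sesq_add_right sesq_commute[OF assms, of d c])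
  also have "\<dots> = sesq M F c c + \<alpha> * sesq M F c d + cnj (\<alpha> * sesq M F c d)
      + (cnj \<alpha> * \<alpha>) * sesq M F d d"
    by (simp add: ring_distribs mult.assoc)
  finally show ?thesis
    by (simp add: cnj_mult_self)
qed

lemma sesq_cauchy_schwarz:
  assumes herm: "hermitian_on F M"
    and V: "\<And>x y \<alpha>. x \<in> V \<Longrightarrow> y \<in> V \<Longrightarrow> (\<lambda>a. x a + \<alpha> * y a) \<in> V"
    and pos: "\<And>x. x \<in> V \<Longrightarrow> 0 \<le> Re (sesq M F x x)"
    and "c \<in> V" "d \<in> V"
  shows "(cmod (sesq M F c d))\<^sup>2 \<le> Re (sesq M F c c) * Re (sesq M F d d)"
proof (cases "sesq M F c d = 0")
  case True
  then show ?thesis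
    using pos \<open>c \<in> V\<close> \<open>d \<in> V\<close> by simp
next
  case False
  define s where "s = sesq M F c d"
  have "cmod s > 0"
    using False s_def by simp
  have "0 \<le> Re (sesq M F c c) + 2 * t * cmod s + t\<^sup>2 * Re (sesq M F d d)" for t :: real
  proof -
    define \<alpha> where "\<alpha> = complex_of_real t * cnj s / complex_of_real (cmod s)"
    have "\<alpha> * s = complex_of_real t * (cnj s * s) / complex_of_real (cmod s)"
      unfolding \<alpha>_def by (simp add: field_simps)
    also have "\<dots> = complex_of_real (t * cmod s)"
      using \<open>cmod s > 0\<close> unfolding cnj_mult_self by (simp add: field_simps power2_eq_square)
    finally have "\<alpha> * s = complex_of_real (t * cmod s)" .
    moreover have "cmod \<alpha> = \<bar>t\<bar>"
      using \<open>cmod s > 0\<close> by (simp add: \<alpha>_def norm_divide norm_mult)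
    moreover have "0 \<le> Re (sesq M F (\<lambda>a. c a + \<alpha> * d a) (\<lambda>a. c a + \<alpha> * d a))"
      by (intro pos V \<open>c \<in> V\<close> \<open>d \<in> V\<close>)
    ultimately show ?thesis
      unfolding re_sesq_add_self[OF herm] s_def by simp
  qed
  moreover have "0 \<le> Re (sesq M F d d)"
    using pos \<open>d \<in> V\<close> .
  ultimately have "(cmod s)\<^sup>2 \<le> Re (sesq M F c c) * Re (sesq M F d d)"
    by (rule quadratic_nonneg_discriminant)
  then show ?thesis
    by (simp only: s_def)
qed

lemma sesq_eq_0_if_null:
  assumes "hermitian_on F M"
    and "\<And>x y \<alpha>. x \<in> V \<Longrightarrow> y \<in> V \<Longrightarrow> (\<lambda>a. x a + \<alpha> * y a) \<in> V"
    and "\<And>x. x \<in> V \<Longrightarrow> 0 \<le> Re (sesq M F x x)"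
    and "c \<in> V" "d \<in> V" and null: "Re (sesq M F d d) = 0"
  shows "sesq M F c d = 0"
proof -
  have "(cmod (sesq M F c d))\<^sup>2 \<le> Re (sesq M F c c) * Re (sesq M F d d)"
    by (rule sesq_cauchy_schwarz[OF assms(1-5)])
  then have "(cmod (sesq M F c d))\<^sup>2 = 0"
    unfolding null by (simp add: antisym)
  then show ?thesis
    by simp
qed

lemma psd_on_mat_vec_eq_0:
  assumes "finite F" "psd_on F B" "Re (sesq B F x x) = 0" "a \<in> F"
  shows "mat_vec_on F B x a = 0"
proof -
  have "sesq B F (delta a) x = 0"
    by (rule sesq_eq_0_if_null[where V = UNIV, OF psd_on_hermitian[OF assms(2)] _ _ _ _ assms(3)])
      (use psd_on_nonneg[OF assms(2)] in auto)
  then show ?thesis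
    by (simp add: sesq_delta_left[OF assms(1,4)])
qed

section \<open>The spectral theorem for Hermitian matrices\<close>

definition orthonormal_on :: "'a set \<Rightarrow> nat \<Rightarrow> (nat \<Rightarrow> 'a \<Rightarrow> complex) \<Rightarrow> bool" where
  "orthonormal_on F m u \<longleftrightarrow> (\<forall>i<m. \<forall>j<m. inner_on F (u i) (u j) = (if i = j then 1 else 0))"

definition eigen_family ::
    "'a set \<Rightarrow> ('a \<Rightarrow> 'a \<Rightarrow> complex) \<Rightarrow> nat \<Rightarrow> (nat \<Rightarrow> 'a \<Rightarrow> complex) \<Rightarrow> (nat \<Rightarrow> real) \<Rightarrow> bool" where
  "eigen_family F A m u l \<longleftrightarrow> orthonormal_on F m u \<and>
     (\<forall>i<m. \<forall>a\<in>F. mat_vec_on F A (u i) a = complex_of_real (l i) * u i a)"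

definition complete_on :: "'a set \<Rightarrow> nat \<Rightarrow> (nat \<Rightarrow> 'a \<Rightarrow> complex) \<Rightarrow> bool" where
  "complete_on F m u \<longleftrightarrow> (\<forall>x. \<forall>a\<in>F. x a = (\<Sum>i<m. inner_on F (u i) x * u i a))"

lemma orthonormal_on_residual_orthogonal:
  assumes "orthonormal_on F m u" "j < m"
  shows "inner_on F (u j) (\<lambda>a. x a - (\<Sum>i<m. inner_on F (u i) x * u i a)) = 0"
proof -
  have "inner_on F (u j) (\<lambda>a. x a - (\<Sum>i<m. inner_on F (u i) x * u i a))
      = inner_on F (u j) x - (\<Sum>i<m. inner_on F (u i) x * inner_on F (u j) (u i))"
    by (simp only: inner_on_diff_right inner_on_sum_right)
  also have "(\<Sum>i<m. inner_on F (u i) x * inner_on F (u j) (u i))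
      = (\<Sum>i<m. if i = j then inner_on F (u j) x else 0)"
    using assms by (intro sum.cong) (auto simp: orthonormal_on_def)
  finally show ?thesis
    using \<open>j < m\<close> by simp
qed

lemma orthonormal_on_bessel:
  assumes "orthonormal_on F m u"
  shows "(\<Sum>i<m. (cmod (inner_on F (u i) x))\<^sup>2) \<le> norm2_on F x"
proof -
  define r where "r = (\<lambda>a. x a - (\<Sum>i<m. inner_on F (u i) x * u i a))"
  define s where "s = (\<Sum>i<m. (cmod (inner_on F (u i) x))\<^sup>2)"
  have orth: "inner_on F r (u i) = 0" if "i < m" for i
    using orthonormal_on_residual_orthogonal[OF assms that, of x] inner_on_commute[of F r "u i"]
    by (simp add: r_def)
  have "inner_on F x r = inner_on F x x - (\<Sum>i<m. inner_on F (u i) x * inner_on F x (u i))"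
    unfolding r_def by (simp only: inner_on_diff_right inner_on_sum_right)
  also have "(\<Sum>i<m. inner_on F (u i) x * inner_on F x (u i)) = complex_of_real s"
    unfolding s_def of_real_sum inner_on_commute[of F x]
    by (intro sum.cong refl) (rule complex_norm_square[symmetric])
  finally have xr: "inner_on F x r = complex_of_real (norm2_on F x - s)"
    by (simp add: inner_on_self)
  have "inner_on F r r = inner_on F r x - (\<Sum>i<m. inner_on F (u i) x * inner_on F r (u i))"
    by (subst (2) r_def) (simp only: inner_on_diff_right inner_on_sum_right)
  also have "\<dots> = cnj (inner_on F x r)"
    using orth inner_on_commute[of F r x] by simp
  finally have "complex_of_real (norm2_on F r) = complex_of_real (norm2_on F x - s)"
    unfolding xr inner_on_self by simp
  then have "norm2_on F r = norm2_on F x - s"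
    by (simp only: of_real_eq_iff)
  then show ?thesis
    using norm2_on_nonneg[of F r] by (simp add: s_def)
qed

lemma orthonormal_on_card_le:
  assumes "finite F" "orthonormal_on F m u"
  shows "m \<le> card F"
proof -
  have "norm2_on F (u i) = 1" if "i < m" for i
    using assms(2) that inner_on_self[of F "u i"] by (simp add: orthonormal_on_def)
  then have "real m = (\<Sum>i<m. norm2_on F (u i))"
    by simp
  also have "\<dots> = (\<Sum>a\<in>F. \<Sum>i<m. (cmod (inner_on F (u i) (delta a)))\<^sup>2)"
    unfolding norm2_on_def by (subst sum.swap) (simp add: inner_on_delta_right[OF assms(1)])
  also have "\<dots> \<le> (\<Sum>a\<in>F. norm2_on F (delta a))"
    by (intro sum_mono orthonormal_on_bessel assms(2))
  also have "\<dots> = (\<Sum>a\<in>F. 1)"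
    using assms(1) by (intro sum.cong) (simp_all add: norm2_on_delta)
  finally show ?thesis
    by simp
qed

lemma complete_onI:
  assumes "orthonormal_on F m u"
    and "\<And>x a. \<forall>i<m. inner_on F (u i) x = 0 \<Longrightarrow> a \<in> F \<Longrightarrow> x a = 0"
  shows "complete_on F m u"
  unfolding complete_on_def
proof (intro allI ballI)
  fix x a
  assume "a \<in> F"
  let ?r = "\<lambda>a. x a - (\<Sum>i<m. inner_on F (u i) x * u i a)"
  have "?r a = 0"
    using assms orthonormal_on_residual_orthogonal \<open>a \<in> F\<close> by blast
  then show "x a = (\<Sum>i<m. inner_on F (u i) x * u i a)"
    by simp
qed

lemma compact_unit_sphere_on:
  assumes "finite F" and supp: "\<And>x a. x \<in> W \<Longrightarrow> a \<notin> F \<Longrightarrow> x a = 0" and "closed W"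
  shows "compact (W \<inter> {x. norm2_on F x = 1})"
proof -
  define S where "S = W \<inter> {x. norm2_on F x = 1}"
  have "S \<subseteq> Pi\<^sub>E UNIV (\<lambda>a. if a \<in> F then cball 0 1 else {0})"
  proof (intro subsetI PiE_I)
    fix x a
    assume "x \<in> S"
    show "x a \<in> (if a \<in> F then cball 0 1 else {0})"
    proof (cases "a \<in> F")
      case True
      have "(cmod (x a))\<^sup>2 \<le> norm2_on F x"
        unfolding norm2_on_def using True \<open>finite F\<close> by (intro member_le_sum) auto
      then show ?thesis
        using True \<open>x \<in> S\<close> by (simp add: S_def abs_square_le_1)
    qed (use supp \<open>x \<in> S\<close> S_def in auto)
  qed simp
  moreover have "compact (Pi\<^sub>E UNIV (\<lambda>a. if a \<in> F then cball (0::complex) 1 else {0}))"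
  proof -
    have "compactin (product_topology (\<lambda>_. euclidean) UNIV)
        (Pi\<^sub>E UNIV (\<lambda>a. if a \<in> F then cball (0::complex) 1 else {0}))"
      by (subst compactin_PiE) auto
    then show ?thesis
      by (simp add: euclidean_product_topology)
  qed
  moreover have "closed S"
    unfolding S_def norm2_on_def using \<open>closed W\<close>
    by (intro closed_Int closed_Collect_eq continuous_intros continuous_on_product_coordinates)
  ultimately show ?thesis
    unfolding S_def[symmetric] by (metis compact_Int_closed inf.absorb_iff2)
qed

lemma sesq_le_if_le_on_unit_sphere:
  assumes "finite F" and scale: "\<And>x c. x \<in> W \<Longrightarrow> (\<lambda>a. c * x a) \<in> W"
    and unit: "\<And>y. y \<in> W \<Longrightarrow> norm2_on F y = 1 \<Longrightarrow> Re (sesq A F y y) \<le> lam"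
    and "x \<in> W"
  shows "Re (sesq A F x x) \<le> lam * norm2_on F x"
proof (cases "norm2_on F x = 0")
  case True
  then have "\<forall>a\<in>F. x a = 0"
    using norm2_on_eq_0[OF \<open>finite F\<close>] by blast
  then have "sesq A F x x = 0"
    by (simp add: sesq_def)
  then show ?thesis
    using True by simp
next
  case False
  then have "0 < norm2_on F x"
    using norm2_on_nonneg[of F x] by simp
  define c where "c = complex_of_real (1 / sqrt (norm2_on F x))"
  have "Re (sesq A F (\<lambda>a. c * x a) (\<lambda>a. c * x a)) \<le> lam"
    unfolding c_def using scale[OF \<open>x \<in> W\<close>] norm2_on_normalize[OF \<open>0 < norm2_on F x\<close>] by (rule unit)
  moreover have "sesq A F (\<lambda>a. c * x a) (\<lambda>a. c * x a) = (cnj c * c) * sesq A F x x"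
    by (simp add: sesq_scale_left sesq_scale_right)
  moreover have "cnj c * c = complex_of_real (1 / norm2_on F x)"
    unfolding cnj_mult_self using \<open>0 < norm2_on F x\<close> by (simp add: c_def norm_divide power_divide)
  ultimately have "Re (sesq A F x x) / norm2_on F x \<le> lam"
    by simp
  then show ?thesis
    using \<open>0 < norm2_on F x\<close> by (simp add: field_simps)
qed

lemma rayleigh_max_exists:
  assumes "finite F" and supp: "\<And>x a. x \<in> W \<Longrightarrow> a \<notin> F \<Longrightarrow> x a = 0" and "closed W"
    and scale: "\<And>x c. x \<in> W \<Longrightarrow> (\<lambda>a. c * x a) \<in> W"
    and "x0 \<in> W" "a0 \<in> F" "x0 a0 \<noteq> 0"
  obtains v where "v \<in> W" "norm2_on F v = 1"
    "\<And>x. x \<in> W \<Longrightarrow> Re (sesq A F x x) \<le> Re (sesq A F v v) * norm2_on F x"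
proof -
  define S where "S = W \<inter> {x. norm2_on F x = 1}"
  have "norm2_on F x0 \<noteq> 0"
    using norm2_on_eq_0[OF \<open>finite F\<close> _ \<open>a0 \<in> F\<close>] \<open>x0 a0 \<noteq> 0\<close> by blast
  then have "0 < norm2_on F x0"
    using norm2_on_nonneg[of F x0] by linarith
  then have "(\<lambda>a. complex_of_real (1 / sqrt (norm2_on F x0)) * x0 a) \<in> S"
    unfolding S_def using scale[OF \<open>x0 \<in> W\<close>] norm2_on_normalize[OF \<open>0 < norm2_on F x0\<close>] by blast
  then have "S \<noteq> {}"
    by blast
  have "continuous_on UNIV (\<lambda>x. Re (sesq A F x x))"
    unfolding sesq_def by (intro continuous_intros continuous_on_product_coordinates)
  then have "continuous_on S (\<lambda>x. Re (sesq A F x x))"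
    using continuous_on_subset by blast
  moreover have "compact S"
    unfolding S_def by (rule compact_unit_sphere_on[OF \<open>finite F\<close> _ \<open>closed W\<close>]) (use supp in blast)
  ultimately obtain v where "v \<in> S" and vmax: "\<And>y. y \<in> S \<Longrightarrow> Re (sesq A F y y) \<le> Re (sesq A F v v)"
    using continuous_attains_sup[OF \<open>compact S\<close> \<open>S \<noteq> {}\<close>] by blast
  have "Re (sesq A F x x) \<le> Re (sesq A F v v) * norm2_on F x" if "x \<in> W" for x
    using sesq_le_if_le_on_unit_sphere[OF \<open>finite F\<close> scale _ that] vmax unfolding S_def by blast
  moreover have "v \<in> W" "norm2_on F v = 1"
    using \<open>v \<in> S\<close> by (simp_all add: S_def)
  ultimately show ?thesis
    using that by blast
qed

text \<open>A maximiser \<open>v\<close> of the Rayleigh quotient on \<open>W\<close> makes \<open>lam I - A\<close> positive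
  on \<open>W\<close> with \<open>v\<close> isotropic; Cauchy--Schwarz then kills \<open>(lam I - A) v\<close>, provided this
  vector lies in \<open>W\<close>.\<close>

lemma rayleigh_max_eigenvector:
  assumes "finite F" and herm: "hermitian_on F A"
    and W: "\<And>x y \<alpha>. x \<in> W \<Longrightarrow> y \<in> W \<Longrightarrow> (\<lambda>a. x a + \<alpha> * y a) \<in> W"
    and "v \<in> W" "norm2_on F v = 1"
    and max: "\<And>x. x \<in> W \<Longrightarrow> Re (sesq A F x x) \<le> lam * norm2_on F x"
    and lam: "lam = Re (sesq A F v v)"
    and z: "(\<lambda>a. if a \<in> F then complex_of_real lam * v a - mat_vec_on F A v a else 0) \<in> W"
    and "a \<in> F"
  shows "mat_vec_on F A v a = complex_of_real lam * v a"
proof -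
  define M where "M = (\<lambda>a b. (if a = b then complex_of_real lam else 0) - A a b)"
  define z where "z = (\<lambda>a. if a \<in> F then complex_of_real lam * v a - mat_vec_on F A v a else 0)"
  have Mv: "mat_vec_on F M y a = complex_of_real lam * y a - mat_vec_on F A y a" if "a \<in> F" for y a
    unfolding M_def by (rule mat_vec_on_shift[OF \<open>finite F\<close> that])
  have sesq_M: "sesq M F x y = complex_of_real lam * inner_on F x y - sesq A F x y" for x y
  proof -
    have "sesq M F x y = inner_on F x (\<lambda>a. complex_of_real lam * y a - mat_vec_on F A y a)"
      unfolding sesq_eq_inner_on by (rule inner_on_cong) (simp_all add: Mv)
    then show ?thesis
      by (simp add: inner_on_diff_right inner_on_scale_right sesq_eq_inner_on)
  qed
  have herm_M: "hermitian_on F M"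
    unfolding M_def by (rule hermitian_on_shift[OF herm])
  have pos_M: "0 \<le> Re (sesq M F x x)" if "x \<in> W" for x
    using max[OF that] by (simp add: sesq_M inner_on_self)
  have null_v: "Re (sesq M F v v) = 0"
    using \<open>norm2_on F v = 1\<close> lam by (simp add: sesq_M inner_on_self)
  have "z \<in> W"
    unfolding z_def by (rule z)
  have "inner_on F z z = sesq M F z v"
    unfolding sesq_eq_inner_on by (rule inner_on_cong) (simp_all add: z_def Mv)
  also have "\<dots> = 0"
    by (rule sesq_eq_0_if_null[OF herm_M W pos_M \<open>z \<in> W\<close> \<open>v \<in> W\<close> null_v])
  finally have "z a = 0"
    using norm2_on_eq_0[OF \<open>finite F\<close> _ \<open>a \<in> F\<close>] by (simp add: inner_on_self)
  then show ?thesis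
    using \<open>a \<in> F\<close> by (simp add: z_def)
qed

lemma eigen_family_orthogonal_mat_vec:
  assumes herm: "hermitian_on F A" and "eigen_family F A k u l" "i < k"
    and orth: "inner_on F (u i) v = 0"
  shows "inner_on F (u i) (mat_vec_on F A v) = 0"
proof -
  have eig: "\<And>a. a \<in> F \<Longrightarrow> mat_vec_on F A (u i) a = complex_of_real (l i) * u i a"
    using assms(2,3) unfolding eigen_family_def by blast
  have "inner_on F (u i) (mat_vec_on F A v) = sesq A F (u i) v"
    by (simp add: sesq_eq_inner_on)
  also have "\<dots> = cnj (sesq A F v (u i))"
    by (rule sesq_commute[OF herm])
  also have "sesq A F v (u i) = inner_on F v (\<lambda>a. complex_of_real (l i) * u i a)"
    unfolding sesq_eq_inner_on by (rule inner_on_cong) (simp_all add: eig)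
  also have "\<dots> = 0"
    using orth inner_on_commute[of F v "u i"] by (simp add: inner_on_scale_right)
  finally show ?thesis
    by simp
qed

lemma eigen_family_append:
  assumes "eigen_family F A k u l" and orth: "\<forall>i<k. inner_on F (u i) v = 0"
    and "norm2_on F v = 1" and eig: "\<forall>a\<in>F. mat_vec_on F A v a = complex_of_real lam * v a"
  shows "eigen_family F A (Suc k) (u(k := v)) (l(k := lam))"
  unfolding eigen_family_def orthonormal_on_def
proof (intro conjI allI impI ballI)
  fix i j
  assume "i < Suc k" "j < Suc k"
  moreover have "inner_on F v (u i) = 0" if "i < k" for i
    using orth that inner_on_commute[of F v "u i"] by simp
  moreover have "inner_on F v v = 1"
    using \<open>norm2_on F v = 1\<close> by (simp add: inner_on_self)
  ultimately show "inner_on F ((u(k := v)) i) ((u(k := v)) j) = (if i = j then 1 else 0)"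
    using assms(1) orth by (auto simp: less_Suc_eq eigen_family_def orthonormal_on_def)
next
  fix i a
  assume "i < Suc k" "a \<in> F"
  then show "mat_vec_on F A ((u(k := v)) i) a = complex_of_real ((l(k := lam)) i) * (u(k := v)) i a"
    using assms(1) eig by (auto simp: less_Suc_eq eigen_family_def)
qed

text \<open>The next eigenvector maximises the Rayleigh quotient on the orthogonal complement
  \<open>W\<close> of the family found so far; \<open>W\<close> is invariant under \<open>A\<close>.\<close>

lemma eigen_family_extend:
  assumes "finite F" and herm: "hermitian_on F A" and fam: "eigen_family F A k u l"
    and orth: "\<forall>i<k. inner_on F (u i) x0 = 0" and "a0 \<in> F" "x0 a0 \<noteq> 0"
  obtains v lam where "eigen_family F A (Suc k) (u(k := v)) (l(k := lam))"
proof -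
  define W where "W = {x. (\<forall>a. a \<notin> F \<longrightarrow> x a = 0) \<and> (\<forall>i<k. inner_on F (u i) x = 0)}"
  have W_lin: "\<And>x y \<alpha>. x \<in> W \<Longrightarrow> y \<in> W \<Longrightarrow> (\<lambda>a. x a + \<alpha> * y a) \<in> W"
    by (simp add: W_def inner_on_add_right)
  have W_scale: "\<And>x c. x \<in> W \<Longrightarrow> (\<lambda>a. c * x a) \<in> W"
    by (auto simp: W_def inner_on_scale_right)
  have "closed W"
    unfolding W_def inner_on_def
    by (intro closed_Collect_conj closed_Collect_all closed_Collect_imp closed_Collect_eq
        continuous_intros continuous_on_product_coordinates) auto
  define x1 where "x1 = (\<lambda>a. if a \<in> F then x0 a else 0)"
  have "x1 \<in> W"
    using orth by (simp add: W_def x1_def inner_on_def cong: sum.cong)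
  moreover have "x1 a0 \<noteq> 0"
    using \<open>a0 \<in> F\<close> \<open>x0 a0 \<noteq> 0\<close> by (simp add: x1_def)
  moreover have "\<And>x a. x \<in> W \<Longrightarrow> a \<notin> F \<Longrightarrow> x a = 0"
    by (simp add: W_def)
  ultimately obtain v where "v \<in> W" "norm2_on F v = 1"
    and max: "\<And>x. x \<in> W \<Longrightarrow> Re (sesq A F x x) \<le> Re (sesq A F v v) * norm2_on F x"
    using rayleigh_max_exists[OF \<open>finite F\<close> _ \<open>closed W\<close> W_scale _ \<open>a0 \<in> F\<close>] by blast
  define lam where "lam = Re (sesq A F v v)"
  have vo: "\<forall>i<k. inner_on F (u i) v = 0"
    using \<open>v \<in> W\<close> by (simp add: W_def)
  have "inner_on F (u i) (\<lambda>a. if a \<in> F then complex_of_real lam * v a - mat_vec_on F A v a else 0) = 0"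
    if "i < k" for i
  proof -
    have "inner_on F (u i) (\<lambda>a. if a \<in> F then complex_of_real lam * v a - mat_vec_on F A v a else 0)
        = inner_on F (u i) (\<lambda>a. complex_of_real lam * v a - mat_vec_on F A v a)"
      by (rule inner_on_cong) simp_all
    then show ?thesis
      using vo eigen_family_orthogonal_mat_vec[OF herm fam that] that
      by (simp add: inner_on_diff_right inner_on_scale_right[of F _ _ v, simplified])
  qed
  then have "(\<lambda>a. if a \<in> F then complex_of_real lam * v a - mat_vec_on F A v a else 0) \<in> W"
    by (simp add: W_def)
  then have "\<forall>a\<in>F. mat_vec_on F A v a = complex_of_real lam * v a"
    using rayleigh_max_eigenvector[OF \<open>finite F\<close> herm W_lin \<open>v \<in> W\<close> \<open>norm2_on F v = 1\<close>
        max[folded lam_def] lam_def] by blast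
  then show ?thesis
    using that eigen_family_append[OF fam vo \<open>norm2_on F v = 1\<close>] by blast
qed

text \<open>By induction on \<open>k\<close>, either there is an eigenfamily of size \<open>k\<close> or a complete
  one; for \<open>k = card F + 1\<close> the first alternative is excluded by Bessel's inequality.\<close>

theorem hermitian_spectral:
  assumes "finite F" "hermitian_on F A"
  obtains m u l where "eigen_family F A m u l" "complete_on F m u"
proof -
  have "(\<exists>u l. eigen_family F A k u l) \<or> (\<exists>m u l. eigen_family F A m u l \<and> complete_on F m u)" for k
  proof (induction k)
    case 0
    then show ?case
      by (simp add: eigen_family_def orthonormal_on_def)
  next
    case (Suc k)
    then show ?case
    proof
      assume "\<exists>u l. eigen_family F A k u l"
      then obtain u l where fam: "eigen_family F A k u l"
        by blast
      show ?case
      proof (cases "complete_on F k u")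
        case True
        then show ?thesis
          using fam by blast
      next
        case False
        have "orthonormal_on F k u"
          using fam by (simp add: eigen_family_def)
        then obtain x0 a0 where "\<forall>i<k. inner_on F (u i) x0 = 0" "a0 \<in> F" "x0 a0 \<noteq> 0"
          using False complete_onI by blast
        then obtain v lam where "eigen_family F A (Suc k) (u(k := v)) (l(k := lam))"
          by (rule eigen_family_extend[OF assms fam])
        then show ?thesis
          by blast
      qed
    qed blast
  qed
  moreover have "\<not> eigen_family F A (Suc (card F)) u l" for u l
    using orthonormal_on_card_le[OF \<open>finite F\<close>, of "Suc (card F)" u] unfolding eigen_family_def by linarith
  ultimately show ?thesis
    using that by blast
qed

lemma complete_on_delta:
  assumes "finite F" "complete_on F m u" "a \<in> F" "b \<in> F"
  shows "delta b a = (\<Sum>i<m. cnj (u i b) * u i a)"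
proof -
  have "delta b a = (\<Sum>i<m. inner_on F (u i) (delta b) * u i a)"
    using assms(2,3) unfolding complete_on_def by blast
  then show ?thesis
    by (simp add: inner_on_delta_right[OF assms(1,4)])
qed

lemma eigen_expansion:
  assumes "finite F" "eigen_family F A m u l" "complete_on F m u" "a \<in> F" "b \<in> F"
  shows "A a b = (\<Sum>i<m. complex_of_real (l i) * u i a * cnj (u i b))"
proof -
  have "A a b = (\<Sum>c\<in>F. A a c * delta b c)"
  proof -
    have "(\<Sum>c\<in>F. A a c * delta b c) = (\<Sum>c\<in>F. if c = b then A a c else 0)"
      by (rule sum.cong) (auto simp: delta_def)
    then show ?thesis
      using assms by simp
  qed
  also have "\<dots> = (\<Sum>c\<in>F. A a c * (\<Sum>i<m. cnj (u i b) * u i c))"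
    using complete_on_delta[OF assms(1,3) _ assms(5)] by simp
  also have "\<dots> = (\<Sum>i<m. cnj (u i b) * mat_vec_on F A (u i) a)"
    unfolding mat_vec_on_def by (simp add: sum_distrib_left mult_ac) (rule sum.swap)
  also have "\<dots> = (\<Sum>i<m. complex_of_real (l i) * u i a * cnj (u i b))"
    using assms(2,4) by (intro sum.cong) (auto simp: eigen_family_def mult_ac)
  finally show ?thesis .
qed

lemma mat_mult_on_expansion:
  assumes "orthonormal_on F m u"
    and P: "\<forall>a\<in>F. \<forall>b\<in>F. P a b = (\<Sum>i<m. f i * u i a * cnj (u i b))"
    and Q: "\<forall>a\<in>F. \<forall>b\<in>F. Q a b = (\<Sum>i<m. g i * u i a * cnj (u i b))"
    and "a \<in> F" "b \<in> F"
  shows "mat_mult_on F P Q a b = (\<Sum>i<m. f i * g i * u i a * cnj (u i b))"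
proof -
  have "mat_mult_on F P Q a b
      = (\<Sum>c\<in>F. (\<Sum>i<m. f i * u i a * cnj (u i c)) * (\<Sum>j<m. g j * u j c * cnj (u j b)))"
    unfolding mat_mult_on_def using P Q \<open>a \<in> F\<close> \<open>b \<in> F\<close> by (intro sum.cong) auto
  also have "\<dots> = (\<Sum>c\<in>F. \<Sum>i<m. \<Sum>j<m. (f i * u i a * g j * cnj (u j b)) * (cnj (u i c) * u j c))"
    by (simp add: sum_product mult_ac)
  also have "\<dots> = (\<Sum>i<m. \<Sum>j<m. \<Sum>c\<in>F. (f i * u i a * g j * cnj (u j b)) * (cnj (u i c) * u j c))"
    by (subst sum.swap) (rule sum.cong[OF refl], rule sum.swap)
  also have "\<dots> = (\<Sum>i<m. \<Sum>j<m. (f i * u i a * g j * cnj (u j b)) * inner_on F (u i) (u j))"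
    by (simp add: inner_on_def sum_distrib_left)
  also have "\<dots> = (\<Sum>i<m. \<Sum>j<m. if j = i then f i * u i a * g i * cnj (u i b) else 0)"
    using assms(1) by (intro sum.cong refl) (auto simp: orthonormal_on_def)
  also have "\<dots> = (\<Sum>i<m. f i * g i * u i a * cnj (u i b))"
    by (simp add: mult_ac)
  finally show ?thesis .
qed

section \<open>Inverse square roots\<close>

definition is_inv_sqrt :: "('a \<Rightarrow> 'a \<Rightarrow> complex) \<Rightarrow> 'a set \<Rightarrow> ('a \<Rightarrow> 'a \<Rightarrow> complex) \<Rightarrow> bool" where
  "is_inv_sqrt A F B \<longleftrightarrow> (\<forall>x y. (x \<notin> F \<or> y \<notin> F) \<longrightarrow> B x y = 0) \<and> psd_on F B \<and>
      (\<forall>x\<in>F. \<forall>y\<in>F. mat_mult_on F (mat_mult_on F B B) A x y = (if x = y then 1 else 0))"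

lemma inv_sqrt_on_eq_The: "inv_sqrt_on A F = (THE B. is_inv_sqrt A F B)"
  unfolding inv_sqrt_on_def is_inv_sqrt_def ..

lemma psd_eigenvalue_pos:
  assumes "finite F" "psd_on F A"
    and inj: "\<forall>c. (\<forall>b\<in>F. mat_vec_on F A c b = 0) \<longrightarrow> (\<forall>a\<in>F. c a = 0)"
    and "eigen_family F A m u l" "i < m"
  shows "0 < l i"
proof -
  have eig: "\<And>a. a \<in> F \<Longrightarrow> mat_vec_on F A (u i) a = complex_of_real (l i) * u i a"
    and unit: "inner_on F (u i) (u i) = 1"
    using assms(4,5) unfolding eigen_family_def orthonormal_on_def by auto
  have "sesq A F (u i) (u i) = inner_on F (u i) (\<lambda>a. complex_of_real (l i) * u i a)"
    unfolding sesq_eq_inner_on by (rule inner_on_cong) (simp_all add: eig)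
  also have "\<dots> = complex_of_real (l i)"
    using unit by (simp add: inner_on_scale_right)
  finally have "0 \<le> l i"
    using psd_on_nonneg[OF assms(2), of "u i"] by simp
  moreover have "l i \<noteq> 0"
  proof
    assume "l i = 0"
    then have "u i a = 0" if "a \<in> F" for a
      using inj eig that by auto
    then have "inner_on F (u i) (u i) = 0"
      by (simp add: inner_on_def)
    then show False
      using unit by simp
  qed
  ultimately show ?thesis
    by simp
qed

lemma psd_on_outer_sum:
  assumes nonneg: "\<forall>i<m. 0 \<le> f i"
    and B: "\<forall>a\<in>F. \<forall>b\<in>F. B a b = (\<Sum>i<m. complex_of_real (f i) * u i a * cnj (u i b))"
  shows "psd_on F B"
  unfolding psd_on_def
proof (intro conjI allI ballI)
  fix a b
  assume "a \<in> F" "b \<in> F"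
  then show "B a b = cnj (B b a)"
    using B by (simp add: mult_ac)
next
  fix c
  have "qform B F c = (\<Sum>a\<in>F. \<Sum>b\<in>F. \<Sum>i<m. cnj (c a) * c b * (f i * u i a * cnj (u i b)))"
    unfolding qform_def using B by (intro sum.cong refl) (simp add: sum_distrib_left)
  also have "\<dots> = (\<Sum>i<m. \<Sum>a\<in>F. \<Sum>b\<in>F. cnj (c a) * c b * (f i * u i a * cnj (u i b)))"
    by (subst sum.swap, rule sum.cong[OF refl], rule sum.swap)
  also have "\<dots> = (\<Sum>i<m. f i * (cnj (inner_on F (u i) c) * inner_on F (u i) c))"
    by (intro sum.cong refl) (simp add: inner_on_def sum_product sum_distrib_left mult_ac)
  also have "\<dots> = complex_of_real (\<Sum>i<m. f i * (cmod (inner_on F (u i) c))\<^sup>2)"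
    by (simp add: cnj_mult_self)
  finally have "qform B F c = complex_of_real (\<Sum>i<m. f i * (cmod (inner_on F (u i) c))\<^sup>2)" .
  moreover have "0 \<le> (\<Sum>i<m. f i * (cmod (inner_on F (u i) c))\<^sup>2)"
    using nonneg by (intro sum_nonneg) simp
  ultimately show "Im (qform B F c) = 0" "0 \<le> Re (qform B F c)"
    by simp_all
qed

text \<open>With an eigenbasis \<open>u\<^sub>i\<close>, \<open>A u\<^sub>i = l\<^sub>i u\<^sub>i\<close>, the inverse square root is
  \<open>\<Sum>\<^sub>i l\<^sub>i\<^sup>-\<^sup>1\<^sup>/\<^sup>2 u\<^sub>i u\<^sub>i\<^sup>*\<close>.\<close>

lemma inv_sqrt_exists:
  assumes "finite F" "psd_on F A"
    and inj: "\<forall>c. (\<forall>b\<in>F. mat_vec_on F A c b = 0) \<longrightarrow> (\<forall>a\<in>F. c a = 0)"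
  obtains B where "is_inv_sqrt A F B"
proof -
  obtain m u l where fam: "eigen_family F A m u l" and compl: "complete_on F m u"
    using hermitian_spectral[OF \<open>finite F\<close> psd_on_hermitian[OF assms(2)]] .
  have on: "orthonormal_on F m u"
    using fam by (simp add: eigen_family_def)
  have lpos: "0 < l i" if "i < m" for i
    by (rule psd_eigenvalue_pos[OF assms fam that])
  define \<mu> where "\<mu> = (\<lambda>i. 1 / sqrt (l i))"
  define B where "B = (\<lambda>a b. if a \<in> F \<and> b \<in> F
    then (\<Sum>i<m. complex_of_real (\<mu> i) * u i a * cnj (u i b)) else 0)"
  have B: "\<forall>a\<in>F. \<forall>b\<in>F. B a b = (\<Sum>i<m. complex_of_real (\<mu> i) * u i a * cnj (u i b))"
    by (simp add: B_def)
  have "psd_on F B"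
    using lpos by (intro psd_on_outer_sum[OF _ B]) (simp add: \<mu>_def less_imp_le)
  moreover have "mat_mult_on F (mat_mult_on F B B) A a b = (if a = b then 1 else 0)"
    if "a \<in> F" "b \<in> F" for a b
  proof -
    have "mat_mult_on F (mat_mult_on F B B) A a b
        = (\<Sum>i<m. complex_of_real (\<mu> i) * complex_of_real (\<mu> i) * complex_of_real (l i) * u i a * cnj (u i b))"
      using mat_mult_on_expansion[OF on B B] eigen_expansion[OF \<open>finite F\<close> fam compl]
      by (intro mat_mult_on_expansion[OF on _ _ that]) auto
    also have "\<dots> = (\<Sum>i<m. cnj (u i b) * u i a)"
    proof (intro sum.cong refl)
      fix i
      assume "i \<in> {..<m}"
      then have "0 < l i"
        by (simp add: lpos)
      then have "complex_of_real (\<mu> i) * complex_of_real (\<mu> i) * complex_of_real (l i) = 1"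
        unfolding \<mu>_def by (simp flip: of_real_mult)
      then show "complex_of_real (\<mu> i) * complex_of_real (\<mu> i) * complex_of_real (l i) * u i a * cnj (u i b)
          = cnj (u i b) * u i a"
        by (simp add: mult_ac)
    qed
    also have "\<dots> = delta b a"
      using complete_on_delta[OF \<open>finite F\<close> compl that] by simp
    finally show ?thesis
      by (simp add: delta_def)
  qed
  ultimately have "is_inv_sqrt A F B"
    unfolding is_inv_sqrt_def by (simp add: B_def)
  then show ?thesis
    using that by blast
qed

text \<open>If \<open>B\<^sub>1\<^sup>2 = B\<^sub>2\<^sup>2\<close> and \<open>(B\<^sub>1 - B\<^sub>2) v = \<mu> v\<close>, then
  \<open>\<mu> (\<langle>v, B\<^sub>1 v\<rangle> + \<langle>v, B\<^sub>2 v\<rangle>) = \<parallel>B\<^sub>1 v\<parallel>\<^sup>2 - \<parallel>B\<^sub>2 v\<parallel>\<^sup>2 = 0\<close>; positivity forces \<open>\<mu> = 0\<close>.\<close>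

lemma psd_sqrt_diff_eigen_identity:
  assumes h1: "hermitian_on F B1" and h2: "hermitian_on F B2"
    and sq: "\<forall>a\<in>F. \<forall>b\<in>F. mat_mult_on F B1 B1 a b = mat_mult_on F B2 B2 a b"
    and diff: "\<forall>a\<in>F. mat_vec_on F B1 v a - mat_vec_on F B2 v a = complex_of_real \<mu> * v a"
  shows "complex_of_real \<mu> * (sesq B1 F v v + sesq B2 F v v) = 0"
proof -
  define w1 where "w1 = mat_vec_on F B1 v"
  define w2 where "w2 = mat_vec_on F B2 v"
  have "inner_on F w1 w1 = inner_on F v (mat_vec_on F (mat_mult_on F B1 B1) v)"
    unfolding w1_def inner_on_mat_vec_hermitian[OF h1] by (simp add: mat_vec_on_mult)
  also have "\<dots> = inner_on F v (mat_vec_on F (mat_mult_on F B2 B2) v)"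
    using sq by (intro inner_on_cong) (simp_all add: mat_vec_on_def)
  also have "\<dots> = inner_on F w2 w2"
    unfolding w2_def inner_on_mat_vec_hermitian[OF h2] by (simp add: mat_vec_on_mult)
  finally have "inner_on F w1 (\<lambda>a. w1 a - w2 a) + inner_on F (\<lambda>a. w1 a - w2 a) w2 = 0"
    by (simp add: inner_on_diff_left inner_on_diff_right)
  moreover have "inner_on F w1 (\<lambda>a. w1 a - w2 a) = complex_of_real \<mu> * inner_on F w1 v"
    using diff by (simp add: w1_def w2_def inner_on_cong[of F _ _ _ "\<lambda>a. complex_of_real \<mu> * v a"]
        inner_on_scale_right)
  moreover have "inner_on F (\<lambda>a. w1 a - w2 a) w2 = complex_of_real \<mu> * inner_on F v w2"
    using diff by (simp add: w1_def w2_def inner_on_cong[of F _ "\<lambda>a. complex_of_real \<mu> * v a"]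
        inner_on_scale_left)
  moreover have "inner_on F w1 v = sesq B1 F v v" "inner_on F v w2 = sesq B2 F v v"
    unfolding w1_def w2_def sesq_eq_inner_on by (rule inner_on_mat_vec_hermitian[OF h1]) (rule refl)
  ultimately show ?thesis
    by (simp add: distrib_left)
qed

lemma psd_sqrt_diff_eigenvalue_eq_0:
  assumes "finite F" and psd1: "psd_on F B1" and psd2: "psd_on F B2"
    and sq: "\<forall>a\<in>F. \<forall>b\<in>F. mat_mult_on F B1 B1 a b = mat_mult_on F B2 B2 a b"
    and eig: "\<forall>a\<in>F. mat_vec_on F (\<lambda>a b. B1 a b - B2 a b) v a = complex_of_real \<mu> * v a"
    and "norm2_on F v = 1"
  shows "\<mu> = 0"
proof (rule ccontr)
  assume "\<mu> \<noteq> 0"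
  have diff: "\<forall>a\<in>F. mat_vec_on F B1 v a - mat_vec_on F B2 v a = complex_of_real \<mu> * v a"
    using eig by (simp add: mat_vec_on_def left_diff_distrib sum_subtractf)
  have "complex_of_real \<mu> * (sesq B1 F v v + sesq B2 F v v) = 0"
    using psd_sqrt_diff_eigen_identity[OF psd_on_hermitian[OF psd1] psd_on_hermitian[OF psd2] sq diff] .
  then have "Re (sesq B1 F v v + sesq B2 F v v) = 0"
    using \<open>\<mu> \<noteq> 0\<close> by simp
  then have null1: "Re (sesq B1 F v v) = 0" and null2: "Re (sesq B2 F v v) = 0"
    using psd_on_nonneg[OF psd1, of v] psd_on_nonneg[OF psd2, of v] by simp_all
  have "v a = 0" if "a \<in> F" for a
    using psd_on_mat_vec_eq_0[OF \<open>finite F\<close> psd1 null1 that] psd_on_mat_vec_eq_0[OF \<open>finite F\<close> psd2 null2 that]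
      bspec[OF diff that] \<open>\<mu> \<noteq> 0\<close> by simp
  then have "norm2_on F v = 0"
    by (simp add: norm2_on_def)
  then show False
    using \<open>norm2_on F v = 1\<close> by simp
qed

lemma psd_sqrt_unique:
  assumes "finite F" "psd_on F B1" "psd_on F B2"
    and sq: "\<forall>a\<in>F. \<forall>b\<in>F. mat_mult_on F B1 B1 a b = mat_mult_on F B2 B2 a b"
    and "a \<in> F" "b \<in> F"
  shows "B1 a b = B2 a b"
proof -
  define D where "D = (\<lambda>a b. B1 a b - B2 a b)"
  have "hermitian_on F D"
    unfolding hermitian_on_def
  proof (intro ballI)
    fix a b
    assume "a \<in> F" "b \<in> F"
    then have "B1 a b = cnj (B1 b a)" "B2 a b = cnj (B2 b a)"
      using assms(2,3) psd_on_hermitian unfolding hermitian_on_def by blast+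
    then show "D a b = cnj (D b a)"
      by (simp add: D_def)
  qed
  then obtain m u \<mu> where fam: "eigen_family F D m u \<mu>" and compl: "complete_on F m u"
    using hermitian_spectral[OF \<open>finite F\<close>] by blast
  have "\<mu> i = 0" if "i < m" for i
  proof (rule psd_sqrt_diff_eigenvalue_eq_0[OF assms(1-4)])
    show "\<forall>a\<in>F. mat_vec_on F (\<lambda>a b. B1 a b - B2 a b) (u i) a = complex_of_real (\<mu> i) * u i a"
      using fam that unfolding eigen_family_def D_def by blast
    show "norm2_on F (u i) = 1"
      using fam that inner_on_self[of F "u i"] unfolding eigen_family_def orthonormal_on_def by simp
  qed
  then have "D a b = 0"
    using eigen_expansion[OF \<open>finite F\<close> fam compl \<open>a \<in> F\<close> \<open>b \<in> F\<close>] by simp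
  then show ?thesis
    by (simp add: D_def)
qed

lemma inv_sqrt_unique:
  assumes "finite F" "hermitian_on F A" "is_inv_sqrt A F B1" "is_inv_sqrt A F B2"
  shows "B1 = B2"
proof -
  have psd: "psd_on F B1" "psd_on F B2"
    and inv: "\<forall>a\<in>F. \<forall>b\<in>F. mat_mult_on F (mat_mult_on F B1 B1) A a b = (if a = b then 1 else 0)"
      "\<forall>a\<in>F. \<forall>b\<in>F. mat_mult_on F (mat_mult_on F B2 B2) A a b = (if a = b then 1 else 0)"
    using assms(3,4) unfolding is_inv_sqrt_def by blast+
  have "hermitian_on F (mat_mult_on F B1 B1)"
    using mat_mult_on_hermitian_cnj[OF psd_on_hermitian[OF psd(1)] psd_on_hermitian[OF psd(1)]]
    unfolding hermitian_on_def by blast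
  then have right_inv: "\<forall>a\<in>F. \<forall>b\<in>F. mat_mult_on F A (mat_mult_on F B1 B1) a b = (if a = b then 1 else 0)"
    using mat_mult_on_hermitian_cnj[OF assms(2)] inv(1) by simp
  have "mat_mult_on F B1 B1 a b = mat_mult_on F B2 B2 a b" if "a \<in> F" "b \<in> F" for a b
  proof -
    have "mat_mult_on F B2 B2 a b = mat_mult_on F (mat_mult_on F B2 B2) (mat_mult_on F A (mat_mult_on F B1 B1)) a b"
      by (rule mat_mult_on_id_right[OF \<open>finite F\<close> right_inv \<open>b \<in> F\<close>, symmetric])
    also have "\<dots> = mat_mult_on F (mat_mult_on F (mat_mult_on F B2 B2) A) (mat_mult_on F B1 B1) a b"
      by (rule mat_mult_on_assoc[symmetric])
    also have "\<dots> = mat_mult_on F B1 B1 a b"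
      by (rule mat_mult_on_id_left[OF \<open>finite F\<close> inv(2) \<open>a \<in> F\<close>])
    finally show ?thesis
      by simp
  qed
  then have "B1 a b = B2 a b" if "a \<in> F" "b \<in> F" for a b
    using psd_sqrt_unique[OF \<open>finite F\<close> psd] that by blast
  moreover have "B1 a b = B2 a b" if "a \<notin> F \<or> b \<notin> F" for a b
    using assms(3,4) that unfolding is_inv_sqrt_def by simp
  ultimately show ?thesis
    by blast
qed

lemma inv_sqrt_on_is_inv_sqrt:
  assumes "finite F" "psd_on F A"
    and "\<forall>c. (\<forall>b\<in>F. mat_vec_on F A c b = 0) \<longrightarrow> (\<forall>a\<in>F. c a = 0)"
  shows "is_inv_sqrt A F (inv_sqrt_on A F)"
proof -
  obtain B where "is_inv_sqrt A F B"
    using inv_sqrt_exists[OF assms] .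
  moreover have "B' = B" if "is_inv_sqrt A F B'" for B'
    using inv_sqrt_unique[OF assms(1) psd_on_hermitian[OF assms(2)] that] calculation .
  ultimately have "\<exists>!B. is_inv_sqrt A F B"
    by blast
  then show ?thesis
    unfolding inv_sqrt_on_eq_The by (rule theI')
qed

section \<open>Positive definite kernels\<close>

lemma pos_def_kernel_hermitian:
  assumes "pos_def_kernel K"
  shows "K x y = cnj (K y x)"
proof -
  have real: "Im (qform K F c) = 0" if "finite F" for F c
    using assms that unfolding pos_def_kernel_def by blast
  have diag: "Im (K z z) = 0" for z
    using real[of "{z}" "delta z"] by (simp add: qform_def delta_def)
  show ?thesis
  proof (cases "x = y")
    case True
    then show ?thesis
      using diag[of x] by (simp add: complex_eq_iff)
  next
    case False
    have "Im (qform K {x, y} (\<lambda>z. if z = x \<or> z = y then 1 else 0)) = 0"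
      "Im (qform K {x, y} (\<lambda>z. if z = x then 1 else if z = y then \<i> else 0)) = 0"
      by (simp_all add: real)
    then have "Im (K x y) + Im (K y x) = 0" "Re (K x y) - Re (K y x) = 0"
      using False diag[of x] diag[of y] by (simp_all add: qform_def)
    then show ?thesis
      by (simp add: complex_eq_iff)
  qed
qed

lemma pos_def_kernel_psd_on:
  assumes "pos_def_kernel K" "finite F"
  shows "psd_on F K"
  using assms pos_def_kernel_hermitian[OF assms(1)] unfolding pos_def_kernel_def psd_on_def by blast

lemma span_fun_eq_sum:
  assumes "finite S" "{x. c x \<noteq> 0} \<subseteq> S"
  shows "span_fun K c y = (\<Sum>x\<in>S. c x * K y x)"
  unfolding span_fun_def by (rule sum.mono_neutral_left) (use assms in auto)

lemma span_norm2_eq_sesq: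
  assumes "finite S" "{x. c x \<noteq> 0} \<subseteq> S"
  shows "span_norm2 K c = Re (sesq K S c c)"
  unfolding span_norm2_def qform_eq_sesq by (subst sesq_mono_set[OF assms]) auto

lemma sesq_span_fun_right:
  assumes "finite S" "{x. d x \<noteq> 0} \<subseteq> S"
  shows "sesq K S c d = (\<Sum>a\<in>S. cnj (c a) * span_fun K d a)"
  unfolding sesq_def span_fun_eq_sum[OF assms] by (simp add: sum_distrib_left mult_ac)

lemma sesq_eq_inner_on_span_fun:
  assumes "finite S" "F \<subseteq> S" "\<And>x. x \<in> S - F \<Longrightarrow> q x = 0" "{x. d x \<noteq> 0} \<subseteq> S"
    and agree: "\<forall>x\<in>F. span_fun K d x = g x"
  shows "sesq K S q d = inner_on F q g"
proof -
  have "sesq K S q d = (\<Sum>a\<in>F. cnj (q a) * span_fun K d a)"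
    unfolding sesq_span_fun_right[OF assms(1,4)]
    by (rule sum.mono_neutral_right[OF assms(1,2)]) (simp add: assms(3))
  then show ?thesis
    unfolding inner_on_def using agree by simp
qed

lemma null_vector_orthogonal_span_fun:
  assumes pd: "pos_def_kernel K" and "finite F" and c_out: "\<And>a. a \<notin> F \<Longrightarrow> c a = 0"
    and null: "sesq K F c c = 0" and "fin_supp d"
  shows "(\<Sum>b\<in>F. c b * cnj (span_fun K d b)) = 0"
proof -
  define S where "S = {x. d x \<noteq> 0} \<union> F"
  have "finite S" "F \<subseteq> S"
    using \<open>fin_supp d\<close> \<open>finite F\<close> by (auto simp: S_def fin_supp_def)
  have psd: "psd_on S K"
    by (rule pos_def_kernel_psd_on[OF pd \<open>finite S\<close>])
  have "Re (sesq K S c c) = 0"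
    using sesq_mono_set[OF \<open>finite S\<close> \<open>F \<subseteq> S\<close> c_out c_out] null by simp
  then have "sesq K S d c = 0"
    using psd by (intro sesq_eq_0_if_null[where V = UNIV]) (auto simp: psd_on_hermitian psd_on_nonneg)
  moreover have "sesq K S d c = cnj (sesq K S c d)"
    using sesq_commute psd psd_on_hermitian by blast
  moreover have "sesq K S c d = (\<Sum>b\<in>S. cnj (c b) * span_fun K d b)"
    by (rule sesq_span_fun_right[OF \<open>finite S\<close>]) (auto simp: S_def)
  moreover have "(\<Sum>b\<in>S. cnj (c b) * span_fun K d b) = (\<Sum>b\<in>F. cnj (c b) * span_fun K d b)"
    by (rule sum.mono_neutral_right) (use \<open>finite S\<close> \<open>F \<subseteq> S\<close> c_out in auto)
  ultimately show ?thesis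
    by simp
qed

text \<open>The span functions approximating \<open>\<delta>\<^sub>z\<close> are orthogonal to the null vector \<open>c\<close>
  of \<open>K\<^sub>F\<close>; in the limit this orthogonality reads \<open>c z = 0\<close>.\<close>

lemma gram_kernel_vanishes_at_delta:
  assumes pd: "pos_def_kernel K" and "in_rkhs K (delta z)" and "finite F"
    and null: "\<forall>a\<in>F. mat_vec_on F K c a = 0" and "z \<in> F"
  shows "c z = 0"
proof -
  define c' where "c' = (\<lambda>a. if a \<in> F then c a else 0)"
  have c'_out: "\<And>a. a \<notin> F \<Longrightarrow> c' a = 0"
    by (simp add: c'_def)
  have "sesq K F c' c' = inner_on F c' (\<lambda>_. 0)"
    unfolding sesq_eq_inner_on using null
    by (intro inner_on_cong) (simp_all add: mat_vec_on_def c'_def cong: sum.cong)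
  then have null': "sesq K F c' c' = 0"
    by (simp add: inner_on_def)
  obtain d where d: "approx_seq K d (delta z)"
    using assms(2) unfolding in_rkhs_def by blast
  have "(\<lambda>n. \<Sum>b\<in>F. c' b * cnj (span_fun K (d n) b)) \<longlonglongrightarrow> (\<Sum>b\<in>F. c' b * cnj (delta z b))"
    using d unfolding approx_seq_def by (intro tendsto_intros) blast
  moreover have "(\<Sum>b\<in>F. c' b * cnj (span_fun K (d n) b)) = 0" for n
    using d unfolding approx_seq_def by (blast intro: null_vector_orthogonal_span_fun[OF pd \<open>finite F\<close> c'_out null'])
  ultimately have "(\<Sum>b\<in>F. c' b * cnj (delta z b)) = 0"
    by (simp add: LIMSEQ_const_iff)
  moreover have "(\<Sum>b\<in>F. c' b * cnj (delta z b)) = c' z"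
    using \<open>finite F\<close> \<open>z \<in> F\<close> by (simp add: delta_def if_distrib cong: if_cong)
  ultimately show ?thesis
    using \<open>z \<in> F\<close> by (simp add: c'_def)
qed

locale pd_kernel =
  fixes K :: "'a \<Rightarrow> 'a \<Rightarrow> complex"
  assumes pos_def: "pos_def_kernel K"
begin

abbreviation N :: "('a \<Rightarrow> complex) \<Rightarrow> real" where "N \<equiv> span_norm2 K"

lemma psd_on_K: "finite F \<Longrightarrow> psd_on F K"
  by (rule pos_def_kernel_psd_on[OF pos_def])

lemma hermitian_on_K: "hermitian_on F K"
  unfolding hermitian_on_def using pos_def_kernel_hermitian[OF pos_def] by blast

lemma fin_supp_diff: "fin_supp c \<Longrightarrow> fin_supp d \<Longrightarrow> fin_supp (\<lambda>x. c x - d x)"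
  unfolding fin_supp_def by (rule finite_subset[of _ "{x. c x \<noteq> 0} \<union> {x. d x \<noteq> 0}"]) auto

lemma span_fun_diff:
  assumes "fin_supp c" "fin_supp d"
  shows "span_fun K (\<lambda>x. c x - d x) y = span_fun K c y - span_fun K d y"
proof -
  define S where "S = {x. c x \<noteq> 0} \<union> {x. d x \<noteq> 0}"
  have "finite S"
    using assms by (simp add: S_def fin_supp_def)
  then show ?thesis
    by (subst (1 2 3) span_fun_eq_sum[where S = S])
      (auto simp: S_def left_diff_distrib sum_subtractf)
qed

lemma span_norm2_nonneg:
  assumes "fin_supp c"
  shows "0 \<le> N c"
proof -
  have "finite {x. c x \<noteq> 0}"
    using assms by (simp add: fin_supp_def)
  then show ?thesis
    using span_norm2_eq_sesq[OF _ order_refl] psd_on_nonneg[OF psd_on_K] by metis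
qed

lemma span_norm2_minus_commute: "N (\<lambda>x. c x - d x) = N (\<lambda>x. d x - c x)"
proof -
  have "{x. c x - d x \<noteq> 0} = {x. d x - c x \<noteq> 0}"
    by auto
  then show ?thesis
    unfolding span_norm2_def qform_def by (simp add: algebra_simps)
qed

lemma sqrt_span_norm2_triangle:
  assumes "fin_supp c" "fin_supp d"
  shows "sqrt (N (\<lambda>x. c x + d x)) \<le> sqrt (N c) + sqrt (N d)"
proof -
  define S where "S = {x. c x \<noteq> 0} \<union> {x. d x \<noteq> 0}"
  have S: "finite S"
    using assms by (simp add: S_def fin_supp_def)
  have Nc: "N c = Re (sesq K S c c)"
    by (rule span_norm2_eq_sesq[OF S]) (auto simp: S_def)
  have Nd: "N d = Re (sesq K S d d)"
    by (rule span_norm2_eq_sesq[OF S]) (auto simp: S_def)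
  have Ncd: "N (\<lambda>x. c x + d x) = Re (sesq K S (\<lambda>x. c x + d x) (\<lambda>x. c x + d x))"
    by (rule span_norm2_eq_sesq[OF S]) (auto simp: S_def)
  have "N (\<lambda>x. c x + d x) = N c + N d + 2 * Re (sesq K S c d)"
    using re_sesq_add_self[OF hermitian_on_K, of S c 1 d] unfolding Ncd Nc Nd by simp
  moreover have "(cmod (sesq K S c d))\<^sup>2 \<le> N c * N d"
    unfolding Nc Nd using psd_on_nonneg[OF psd_on_K[OF S]]
    by (intro sesq_cauchy_schwarz[where V = UNIV, OF hermitian_on_K]) auto
  then have "cmod (sesq K S c d) \<le> sqrt (N c * N d)"
    by (rule real_le_rsqrt)
  then have "Re (sesq K S c d) \<le> sqrt (N c) * sqrt (N d)"
    using complex_Re_le_cmod[of "sesq K S c d"] by (simp add: real_sqrt_mult)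
  ultimately have "N (\<lambda>x. c x + d x) \<le> (sqrt (N c) + sqrt (N d))\<^sup>2"
    using span_norm2_nonneg[OF assms(1)] span_norm2_nonneg[OF assms(2)]
    by (simp add: power2_eq_square algebra_simps)
  then have "sqrt (N (\<lambda>x. c x + d x)) \<le> sqrt ((sqrt (N c) + sqrt (N d))\<^sup>2)"
    by (rule real_sqrt_le_mono)
  then show ?thesis
    using span_norm2_nonneg[OF assms(1)] span_norm2_nonneg[OF assms(2)] by simp
qed

lemma sqrt_span_norm2_triangle_diff:
  assumes "fin_supp c" "fin_supp d"
  shows "sqrt (N c) \<le> sqrt (N (\<lambda>x. c x - d x)) + sqrt (N d)"
  using sqrt_span_norm2_triangle[OF fin_supp_diff[OF assms] assms(2)] by simp

lemma sqrt_span_norm2_reverse_triangle: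
  assumes "fin_supp c" "fin_supp d"
  shows "\<bar>sqrt (N c) - sqrt (N d)\<bar> \<le> sqrt (N (\<lambda>x. c x - d x))"
  using sqrt_span_norm2_triangle_diff[OF assms] sqrt_span_norm2_triangle_diff[OF assms(2,1)]
    span_norm2_minus_commute[of d c] by (simp add: abs_le_iff)

lemma K_diag_nonneg: "0 \<le> Re (K y y)"
proof -
  have "0 \<le> Re (qform K {y} (delta y))"
    using pos_def unfolding pos_def_kernel_def by blast
  then show ?thesis
    by (simp add: qform_def delta_def)
qed

text \<open>The reproducing property \<open>f(y) = \<langle>K(\<cdot>,y), f\<rangle>\<close> followed by Cauchy--Schwarz.\<close>

lemma span_fun_bound:
  assumes "fin_supp d"
  shows "(cmod (span_fun K d y))\<^sup>2 \<le> Re (K y y) * N d"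
proof -
  define S where "S = insert y {x. d x \<noteq> 0}"
  have S: "finite S"
    using assms by (simp add: S_def fin_supp_def)
  have "sesq K S (delta y) d = (\<Sum>a\<in>S. cnj (delta y a) * span_fun K d a)"
    by (rule sesq_span_fun_right[OF S]) (auto simp: S_def)
  also have "\<dots> = (\<Sum>a\<in>S. if a = y then span_fun K d a else 0)"
    by (rule sum.cong) (auto simp: delta_def)
  also have "\<dots> = span_fun K d y"
    using S by (simp add: S_def)
  finally have "sesq K S (delta y) d = span_fun K d y" .
  moreover have "sesq K S (delta y) (delta y) = sesq K {y} (delta y) (delta y)"
    by (rule sesq_mono_set[OF S]) (auto simp: S_def delta_def)
  then have "sesq K S (delta y) (delta y) = K y y"
    by (simp add: sesq_def delta_def)
  moreover have "N d = Re (sesq K S d d)"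
    by (rule span_norm2_eq_sesq[OF S]) (auto simp: S_def)
  moreover have "(cmod (sesq K S (delta y) d))\<^sup>2 \<le> Re (sesq K S (delta y) (delta y)) * Re (sesq K S d d)"
    using psd_on_nonneg[OF psd_on_K[OF S]] by (intro sesq_cauchy_schwarz[where V = UNIV, OF hermitian_on_K]) auto
  ultimately show ?thesis
    by simp
qed

end

section \<open>Minimal-norm interpolation\<close>

text \<open>\<open>interp K F h = K\<^sub>F\<^sup>-\<^sup>1 h\<^sub>F\<close> are the coefficients of the element of
  \<open>span {K(\<cdot>,x) | x \<in> F}\<close> that interpolates \<open>h\<close> on \<open>F\<close>; it has minimal norm among all
  interpolants, and its squared norm is \<open>gram_norm2 K F h = \<langle>h\<^sub>F, K\<^sub>F\<^sup>-\<^sup>1 h\<^sub>F\<rangle>\<close>.\<close>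

definition gram_inv :: "('a \<Rightarrow> 'a \<Rightarrow> complex) \<Rightarrow> 'a set \<Rightarrow> 'a \<Rightarrow> 'a \<Rightarrow> complex" where
  "gram_inv K F = mat_mult_on F (inv_sqrt_on K F) (inv_sqrt_on K F)"

definition interp :: "('a \<Rightarrow> 'a \<Rightarrow> complex) \<Rightarrow> 'a set \<Rightarrow> ('a \<Rightarrow> complex) \<Rightarrow> 'a \<Rightarrow> complex" where
  "interp K F h = mat_vec_on F (gram_inv K F) h"

definition gram_norm2 :: "('a \<Rightarrow> 'a \<Rightarrow> complex) \<Rightarrow> 'a set \<Rightarrow> ('a \<Rightarrow> complex) \<Rightarrow> real" where
  "gram_norm2 K F h = Re (inner_on F h (interp K F h))"

lemma gram_norm2_tendsto:
  assumes "\<And>x. (\<lambda>n. g n x) \<longlonglongrightarrow> h x"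
  shows "(\<lambda>n. gram_norm2 K F (g n)) \<longlonglongrightarrow> gram_norm2 K F h"
  unfolding gram_norm2_def inner_on_def interp_def mat_vec_on_def
  by (intro tendsto_intros assms)

locale strictly_pd_kernel = pd_kernel +
  assumes gram_injective: "finite F \<Longrightarrow> \<forall>c. (\<forall>b\<in>F. mat_vec_on F K c b = 0) \<longrightarrow> (\<forall>a\<in>F. c a = 0)"
begin

lemma is_inv_sqrt_K: "finite F \<Longrightarrow> is_inv_sqrt K F (inv_sqrt_on K F)"
  by (rule inv_sqrt_on_is_inv_sqrt[OF _ psd_on_K gram_injective])

lemma hermitian_on_inv_sqrt: "finite F \<Longrightarrow> hermitian_on F (inv_sqrt_on K F)"
  using is_inv_sqrt_K psd_on_hermitian unfolding is_inv_sqrt_def by blast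

lemma gram_inv_left:
  "finite F \<Longrightarrow> \<forall>x\<in>F. \<forall>y\<in>F. mat_mult_on F (gram_inv K F) K x y = (if x = y then 1 else 0)"
  using is_inv_sqrt_K unfolding is_inv_sqrt_def gram_inv_def by blast

lemma gram_inv_right:
  assumes "finite F"
  shows "\<forall>x\<in>F. \<forall>y\<in>F. mat_mult_on F K (gram_inv K F) x y = (if x = y then 1 else 0)"
proof -
  have "hermitian_on F (gram_inv K F)"
    using mat_mult_on_hermitian_cnj[OF hermitian_on_inv_sqrt hermitian_on_inv_sqrt] assms
    unfolding hermitian_on_def gram_inv_def by blast
  then show ?thesis
    using mat_mult_on_hermitian_cnj[OF hermitian_on_K] gram_inv_left[OF assms] by simp
qed

lemma interp_eq_0: "finite F \<Longrightarrow> x \<notin> F \<Longrightarrow> interp K F h x = 0"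
  using is_inv_sqrt_K unfolding interp_def gram_inv_def mat_vec_on_def mat_mult_on_def is_inv_sqrt_def
  by simp

lemma interp_supp: "finite F \<Longrightarrow> {x. interp K F h x \<noteq> 0} \<subseteq> F"
  using interp_eq_0 by blast

lemma fin_supp_interp: "finite F \<Longrightarrow> fin_supp (interp K F h)"
  unfolding fin_supp_def using interp_supp finite_subset by blast

lemma interp_diff: "interp K F (\<lambda>x. h1 x - h2 x) = (\<lambda>x. interp K F h1 x - interp K F h2 x)"
  unfolding interp_def mat_vec_on_def by (simp add: right_diff_distrib sum_subtractf)

lemma span_fun_eq_mat_vec:
  assumes "finite F" "{x. c x \<noteq> 0} \<subseteq> F"
  shows "span_fun K c = mat_vec_on F K c"
  unfolding span_fun_eq_sum[OF assms] mat_vec_on_def by (simp add: mult.commute)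

lemma span_fun_interp:
  assumes "finite F" "y \<in> F"
  shows "span_fun K (interp K F h) y = h y"
proof -
  have "span_fun K (interp K F h) y = mat_vec_on F (mat_mult_on F K (gram_inv K F)) h y"
    unfolding span_fun_eq_mat_vec[OF assms(1) interp_supp[OF assms(1)]]
    by (simp add: interp_def mat_vec_on_mult)
  also have "\<dots> = (\<Sum>z\<in>F. if z = y then h z else 0)"
    unfolding mat_vec_on_def using gram_inv_right[OF assms(1)] assms(2) by (intro sum.cong) auto
  also have "\<dots> = h y"
    using assms by simp
  finally show ?thesis .
qed

lemma interp_span_fun:
  assumes "finite F" "{x. c x \<noteq> 0} \<subseteq> F"
  shows "interp K F (span_fun K c) = c"
proof
  fix x
  show "interp K F (span_fun K c) x = c x"
  proof (cases "x \<in> F")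
    case False
    then show ?thesis
      using interp_eq_0[OF assms(1)] assms(2) by auto
  next
    case True
    have "interp K F (span_fun K c) x = mat_vec_on F (mat_mult_on F (gram_inv K F) K) c x"
      by (simp add: interp_def span_fun_eq_mat_vec[OF assms] mat_vec_on_mult)
    also have "\<dots> = (\<Sum>z\<in>F. if z = x then c z else 0)"
      unfolding mat_vec_on_def using gram_inv_left[OF assms(1)] True by (intro sum.cong) auto
    also have "\<dots> = c x"
      using assms(1) True by simp
    finally show ?thesis .
  qed
qed

lemma span_norm2_interp:
  assumes "finite F"
  shows "N (interp K F h) = gram_norm2 K F h"
proof -
  have "N (interp K F h) = Re (sesq K F (interp K F h) (interp K F h))"
    by (rule span_norm2_eq_sesq[OF assms interp_supp[OF assms]])
  also have "sesq K F (interp K F h) (interp K F h) = inner_on F (interp K F h) h"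
    unfolding sesq_eq_inner_on
    by (rule inner_on_cong)
      (simp_all add: span_fun_eq_mat_vec[OF assms interp_supp[OF assms], symmetric] span_fun_interp[OF assms])
  also have "\<dots> = cnj (inner_on F h (interp K F h))"
    by (rule inner_on_commute)
  finally show ?thesis
    by (simp add: gram_norm2_def)
qed

lemma gram_norm2_nonneg: "finite F \<Longrightarrow> 0 \<le> gram_norm2 K F h"
  using span_norm2_interp span_norm2_nonneg fin_supp_interp by metis

lemma l2_norm_inv_sqrt:
  assumes "finite F"
  shows "(l2_norm_on F (mat_vec_on F (inv_sqrt_on K F) h))\<^sup>2 = gram_norm2 K F h"
proof -
  let ?v = "mat_vec_on F (inv_sqrt_on K F) h"
  have "(l2_norm_on F ?v)\<^sup>2 = norm2_on F ?v"
    unfolding l2_norm_on_def norm2_on_def by (simp add: sum_nonneg)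
  also have "complex_of_real (norm2_on F ?v) = inner_on F ?v ?v"
    by (simp add: inner_on_self)
  also have "\<dots> = inner_on F h (mat_vec_on F (inv_sqrt_on K F) ?v)"
    by (rule inner_on_mat_vec_hermitian[OF hermitian_on_inv_sqrt[OF assms]])
  also have "\<dots> = inner_on F h (interp K F h)"
    by (simp add: interp_def gram_inv_def mat_vec_on_mult)
  finally show ?thesis
    unfolding gram_norm2_def by (metis Re_complex_of_real)
qed

text \<open>Pythagoras: \<open>c - interp K F h\<close> is orthogonal to the span of \<open>K(\<cdot>,x)\<close>, \<open>x \<in> F\<close>,
  whenever the function of \<open>c\<close> agrees with \<open>h\<close> on \<open>F\<close>.\<close>

lemma span_norm2_diff_interp:
  assumes "finite F" "fin_supp c" and agree: "\<forall>x\<in>F. span_fun K c x = h x"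
  shows "N (\<lambda>x. c x - interp K F h x) = N c - gram_norm2 K F h"
proof -
  define q where "q = interp K F h"
  define S where "S = {x. c x \<noteq> 0} \<union> F"
  have S: "finite S"
    using assms(1,2) by (simp add: S_def fin_supp_def)
  have "F \<subseteq> S" and cS: "{x. c x \<noteq> 0} \<subseteq> S"
    by (auto simp: S_def)
  have qS: "{x. q x \<noteq> 0} \<subseteq> S"
    using interp_supp[OF assms(1)] \<open>F \<subseteq> S\<close> by (auto simp: q_def)
  have q_out: "\<And>x. x \<in> S - F \<Longrightarrow> q x = 0"
    using interp_eq_0[OF assms(1)] by (simp add: q_def)
  have "N (\<lambda>x. c x - q x) = Re (sesq K S (\<lambda>x. c x - q x) (\<lambda>x. c x - q x))"
  proof (rule span_norm2_eq_sesq[OF S])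
    have "{x. c x - q x \<noteq> 0} \<subseteq> {x. c x \<noteq> 0} \<union> {x. q x \<noteq> 0}"
      by auto
    then show "{x. c x - q x \<noteq> 0} \<subseteq> S"
      using qS cS by blast
  qed
  moreover have "N c = Re (sesq K S c c)"
    by (rule span_norm2_eq_sesq[OF S cS])
  moreover have qc: "sesq K S q c = inner_on F q h"
    by (rule sesq_eq_inner_on_span_fun[where q = q, OF S \<open>F \<subseteq> S\<close> q_out cS agree])
  moreover have "\<forall>x\<in>F. span_fun K q x = h x"
    using span_fun_interp[OF assms(1)] by (simp add: q_def)
  then have "sesq K S q q = inner_on F q h"
    using sesq_eq_inner_on_span_fun[of S F q q K h] S \<open>F \<subseteq> S\<close> q_out qS by blast
  moreover have "sesq K S c q = cnj (inner_on F q h)"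
    using sesq_commute[OF hermitian_on_K, of S c q] qc by simp
  moreover have "gram_norm2 K F h = Re (inner_on F q h)"
    unfolding gram_norm2_def q_def by (subst inner_on_commute) simp
  ultimately show ?thesis
    by (simp add: sesq_diff_left sesq_diff_right q_def)
qed

lemma gram_norm2_le_span_norm2:
  assumes "finite F" "fin_supp c" "\<forall>x\<in>F. span_fun K c x = h x"
  shows "gram_norm2 K F h \<le> N c"
  using span_norm2_diff_interp[OF assms]
    span_norm2_nonneg[OF fin_supp_diff[OF assms(2) fin_supp_interp[OF assms(1), of h]]] by simp

lemma interp_agrees:
  assumes "finite G" "F \<subseteq> G"
  shows "\<forall>x\<in>F. span_fun K (interp K G h) x = h x"
  using span_fun_interp[OF assms(1)] assms(2) by blast

lemma gram_norm2_mono: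
  assumes "finite G" "F \<subseteq> G"
  shows "gram_norm2 K F h \<le> gram_norm2 K G h"
proof -
  have "gram_norm2 K F h \<le> N (interp K G h)"
    by (rule gram_norm2_le_span_norm2[OF finite_subset[OF assms(2,1)] fin_supp_interp[OF assms(1)]
          interp_agrees[OF assms]])
  then show ?thesis
    by (simp add: span_norm2_interp[OF assms(1)])
qed

lemma span_norm2_interp_diff:
  assumes "finite G" "F \<subseteq> G"
  shows "N (\<lambda>x. interp K G h x - interp K F h x) = gram_norm2 K G h - gram_norm2 K F h"
  using span_norm2_diff_interp[OF finite_subset[OF assms(2,1)] fin_supp_interp[OF assms(1)]
      interp_agrees[OF assms]]
  by (simp add: span_norm2_interp[OF assms(1)])

lemma interp_pointwise_error:
  assumes "finite F"
  shows "(cmod (span_fun K (interp K F h) y - h y))\<^sup>2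
    \<le> Re (K y y) * (gram_norm2 K (insert y F) h - gram_norm2 K F h)"
proof -
  let ?G = "insert y F"
  have "finite ?G"
    using assms by simp
  have fin: "fin_supp (interp K F h)" "fin_supp (interp K ?G h)"
    using fin_supp_interp assms by simp_all
  have "span_fun K (interp K F h) y - h y = span_fun K (\<lambda>x. interp K F h x - interp K ?G h x) y"
    using span_fun_diff[OF fin] span_fun_interp[OF \<open>finite ?G\<close>] by simp
  moreover have "N (\<lambda>x. interp K F h x - interp K ?G h x) = gram_norm2 K ?G h - gram_norm2 K F h"
    using span_norm2_interp_diff[OF \<open>finite ?G\<close>] span_norm2_minus_commute by auto
  ultimately show ?thesis
    using span_fun_bound[OF fin_supp_diff[OF fin], of y] by simp
qed

section \<open>The norm of the reproducing kernel Hilbert space\<close>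

lemma sqrt_span_norm2_le_interp:
  assumes "fin_supp c" "fin_supp d"
  shows "sqrt (N c) \<le> sqrt (N (\<lambda>x. c x - d x)) + sqrt (gram_norm2 K {x. c x \<noteq> 0} (span_fun K d))"
proof -
  define S where "S = {x. c x \<noteq> 0}"
  have S: "finite S"
    using assms(1) by (simp add: S_def fin_supp_def)
  define e where "e = interp K S (span_fun K d)"
  have "span_fun K (\<lambda>x. c x - d x) = (\<lambda>y. span_fun K c y - span_fun K d y)"
    by (intro ext span_fun_diff[OF assms])
  then have "interp K S (span_fun K (\<lambda>x. c x - d x)) = interp K S (\<lambda>y. span_fun K c y - span_fun K d y)"
    by simp
  also have "\<dots> = (\<lambda>x. c x - e x)"
    using interp_span_fun[OF S, of c] unfolding interp_diff e_def by (simp add: S_def)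
  finally have ce: "(\<lambda>x. c x - e x) = interp K S (span_fun K (\<lambda>x. c x - d x))" ..
  have "N (\<lambda>x. c x - e x) \<le> N (\<lambda>x. c x - d x)"
    unfolding ce span_norm2_interp[OF S]
    by (rule gram_norm2_le_span_norm2[OF S fin_supp_diff[OF assms]]) simp
  moreover have "N e = gram_norm2 K S (span_fun K d)"
    unfolding e_def by (rule span_norm2_interp[OF S])
  moreover have "sqrt (N c) \<le> sqrt (N (\<lambda>x. c x - e x)) + sqrt (N e)"
    unfolding e_def by (rule sqrt_span_norm2_triangle_diff[OF assms(1) fin_supp_interp[OF S]])
  ultimately show ?thesis
    unfolding S_def by (smt (verit) real_sqrt_le_mono)
qed

lemma approx_seq_convergent:
  assumes "approx_seq K c h"
  shows "convergent (\<lambda>n. sqrt (N (c n)))"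
proof -
  have fin: "\<And>n. fin_supp (c n)"
    and cauchy: "\<And>e. 0 < e \<Longrightarrow> \<exists>M. \<forall>m\<ge>M. \<forall>n\<ge>M. N (\<lambda>x. c m x - c n x) < e"
    using assms unfolding approx_seq_def by blast+
  have "Cauchy (\<lambda>n. sqrt (N (c n)))"
  proof (rule metric_CauchyI)
    fix e :: real
    assume "0 < e"
    then obtain M where M: "\<forall>m\<ge>M. \<forall>n\<ge>M. N (\<lambda>x. c m x - c n x) < e\<^sup>2"
      using cauchy[of "e\<^sup>2"] by auto
    have "dist (sqrt (N (c m))) (sqrt (N (c n))) < e" if "M \<le> m" "M \<le> n" for m n
    proof -
      have "sqrt (N (\<lambda>x. c m x - c n x)) < sqrt (e\<^sup>2)"
        using M that by (intro real_sqrt_less_mono) blast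
      then show ?thesis
        using sqrt_span_norm2_reverse_triangle[OF fin fin, of m n] \<open>0 < e\<close> by (simp add: dist_real_def)
    qed
    then show "\<exists>M. \<forall>m\<ge>M. \<forall>n\<ge>M. dist (sqrt (N (c m))) (sqrt (N (c n))) < e"
      by blast
  qed
  then show ?thesis
    by (simp add: Cauchy_convergent_iff)
qed

lemma approx_seq_lim_squared:
  assumes "approx_seq K c h"
  shows "(\<lambda>n. N (c n)) \<longlonglongrightarrow> (lim (\<lambda>n. sqrt (N (c n))))\<^sup>2"
proof -
  have "(\<lambda>n. (sqrt (N (c n)))\<^sup>2) \<longlonglongrightarrow> (lim (\<lambda>n. sqrt (N (c n))))\<^sup>2"
    using approx_seq_convergent[OF assms] by (intro tendsto_intros) (simp add: convergent_LIMSEQ_iff)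
  moreover have "(sqrt (N (c n)))\<^sup>2 = N (c n)" for n
    using assms span_norm2_nonneg unfolding approx_seq_def by simp
  ultimately show ?thesis
    by simp
qed

lemma gram_norm2_le_approx_lim:
  assumes "approx_seq K c h" "finite F"
  shows "gram_norm2 K F h \<le> (lim (\<lambda>n. sqrt (N (c n))))\<^sup>2"
proof (rule LIMSEQ_le[OF _ approx_seq_lim_squared[OF assms(1)]])
  show "(\<lambda>n. gram_norm2 K F (span_fun K (c n))) \<longlonglongrightarrow> gram_norm2 K F h"
    using assms(1) unfolding approx_seq_def by (intro gram_norm2_tendsto) blast
  show "\<exists>M. \<forall>n\<ge>M. gram_norm2 K F (span_fun K (c n)) \<le> N (c n)"
    using assms unfolding approx_seq_def by (blast intro: gram_norm2_le_span_norm2)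
qed

lemma sqrt_span_norm2_le_limit:
  assumes "approx_seq K c h" "0 < e"
    and close: "\<And>m. m \<ge> n0 \<Longrightarrow> N (\<lambda>x. c n x - c m x) < e\<^sup>2"
  shows "sqrt (N (c n)) \<le> e + sqrt (gram_norm2 K {x. c n x \<noteq> 0} h)"
proof -
  have fin: "\<And>n. fin_supp (c n)" and pt: "\<And>y. (\<lambda>n. span_fun K (c n) y) \<longlonglongrightarrow> h y"
    using assms(1) unfolding approx_seq_def by blast+
  define S where "S = {x. c n x \<noteq> 0}"
  have "sqrt (N (c n)) \<le> e + sqrt (gram_norm2 K S (span_fun K (c m)))" if "m \<ge> n0" for m
  proof -
    have "sqrt (N (\<lambda>x. c n x - c m x)) < sqrt (e\<^sup>2)"
      using close[OF that] by (rule real_sqrt_less_mono)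
    then show ?thesis
      using sqrt_span_norm2_le_interp[OF fin fin, of n m] \<open>0 < e\<close> by (simp add: S_def)
  qed
  moreover have "(\<lambda>m. e + sqrt (gram_norm2 K S (span_fun K (c m)))) \<longlonglongrightarrow> e + sqrt (gram_norm2 K S h)"
    by (intro tendsto_intros gram_norm2_tendsto pt)
  ultimately show ?thesis
    unfolding S_def by (intro LIMSEQ_le_const) auto
qed

lemma approx_lim_le:
  assumes "approx_seq K c h" and M: "\<And>F. finite F \<Longrightarrow> gram_norm2 K F h \<le> M"
  shows "(lim (\<lambda>n. sqrt (N (c n))))\<^sup>2 \<le> M"
proof -
  have fin: "\<And>n. fin_supp (c n)"
    and cauchy: "\<And>e. 0 < e \<Longrightarrow> \<exists>M. \<forall>m\<ge>M. \<forall>n\<ge>M. N (\<lambda>x. c m x - c n x) < e"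
    using assms(1) unfolding approx_seq_def by blast+
  define L where "L = lim (\<lambda>n. sqrt (N (c n)))"
  have L: "(\<lambda>n. sqrt (N (c n))) \<longlonglongrightarrow> L"
    using approx_seq_convergent[OF assms(1)] by (simp add: L_def convergent_LIMSEQ_iff)
  have "0 \<le> L"
    by (rule LIMSEQ_le_const[OF L]) (use fin span_norm2_nonneg in auto)
  have "0 \<le> M"
    using M[of "{}"] gram_norm2_nonneg[of "{}" h] by simp
  have "L \<le> sqrt M + e" if "0 < e" for e
  proof -
    obtain n0 where n0: "\<forall>m\<ge>n0. \<forall>n\<ge>n0. N (\<lambda>x. c m x - c n x) < e\<^sup>2"
      using cauchy[of "e\<^sup>2"] \<open>0 < e\<close> by auto
    have "sqrt (N (c n)) \<le> sqrt M + e" if "n \<ge> n0" for n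
    proof -
      have "sqrt (N (c n)) \<le> e + sqrt (gram_norm2 K {x. c n x \<noteq> 0} h)"
        using n0 that by (intro sqrt_span_norm2_le_limit[OF assms(1) \<open>0 < e\<close>, of n0]) blast
      also have "\<dots> \<le> e + sqrt M"
        using M fin[of n] by (simp add: fin_supp_def)
      finally show ?thesis
        by simp
    qed
    then show ?thesis
      by (intro LIMSEQ_le_const2[OF L]) blast
  qed
  then have "L \<le> sqrt M"
    by (rule field_le_epsilon)
  then have "L\<^sup>2 \<le> (sqrt M)\<^sup>2"
    using \<open>0 \<le> L\<close> by (rule power_mono)
  then show ?thesis
    using \<open>0 \<le> M\<close> by (simp add: L_def)
qed

theorem rkhs_norm_eq_SUP:
  assumes "in_rkhs K h"
  shows "bdd_above ((\<lambda>F. gram_norm2 K F h) ` {F. finite F})"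
    and "(rkhs_norm K h)\<^sup>2 = (SUP F\<in>{F. finite F}. gram_norm2 K F h)"
proof -
  define c where "c = (SOME c. approx_seq K c h)"
  have c: "approx_seq K c h"
    using assms unfolding in_rkhs_def c_def by (rule someI_ex)
  have norm: "rkhs_norm K h = lim (\<lambda>n. sqrt (N (c n)))"
    by (simp add: rkhs_norm_def c_def)
  show bdd: "bdd_above ((\<lambda>F. gram_norm2 K F h) ` {F. finite F})"
    using gram_norm2_le_approx_lim[OF c] by (auto simp: bdd_above_def)
  show "(rkhs_norm K h)\<^sup>2 = (SUP F\<in>{F. finite F}. gram_norm2 K F h)"
    unfolding norm
  proof (rule antisym)
    show "(lim (\<lambda>n. sqrt (N (c n))))\<^sup>2 \<le> (SUP F\<in>{F. finite F}. gram_norm2 K F h)"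
      by (rule approx_lim_le[OF c]) (rule cSUP_upper[OF _ bdd], simp)
    show "(SUP F\<in>{F. finite F}. gram_norm2 K F h) \<le> (lim (\<lambda>n. sqrt (N (c n))))\<^sup>2"
      using gram_norm2_le_approx_lim[OF c] by (intro cSUP_least) auto
  qed
qed

lemma finite_chain_approaching_SUP:
  assumes bdd: "bdd_above ((\<lambda>F. gram_norm2 K F h) ` {F. finite F})"
  obtains G where "\<And>n. finite (G n)" "\<And>m n. m \<le> n \<Longrightarrow> G m \<subseteq> G n"
    "\<And>n. (SUP F\<in>{F. finite F}. gram_norm2 K F h) - inverse (real (Suc n)) < gram_norm2 K (G n) h"
proof -
  let ?M = "SUP F\<in>{F. finite F}. gram_norm2 K F h"
  have "\<exists>F\<in>{F. finite F}. ?M - inverse (real (Suc n)) < gram_norm2 K F h" for n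
    by (subst less_cSUP_iff[OF _ bdd, symmetric]) auto
  then have "\<exists>Fs. \<forall>n. finite (Fs n) \<and> ?M - inverse (real (Suc n)) < gram_norm2 K (Fs n) h"
    by (intro choice) simp
  then obtain Fs where Fs: "\<And>n. finite (Fs n)" "\<And>n. ?M - inverse (real (Suc n)) < gram_norm2 K (Fs n) h"
    by blast
  define G where "G = (\<lambda>n. \<Union>k\<le>n. Fs k)"
  have "finite (G n)" for n
    using Fs(1) by (simp add: G_def)
  moreover have "G m \<subseteq> G n" if "m \<le> n" for m n
    unfolding G_def by (rule UN_mono) (use that in auto)
  moreover have "?M - inverse (real (Suc n)) < gram_norm2 K (G n) h" for n
  proof -
    have "Fs n \<subseteq> G n"
      by (auto simp: G_def)
    then show ?thesis
      using Fs(2)[of n] gram_norm2_mono[OF \<open>finite (G n)\<close>, of "Fs n" h] by linarith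
  qed
  ultimately show ?thesis
    using that by blast
qed

lemma interp_chain_cauchy:
  assumes G: "\<And>n. finite (G n)" and mono: "\<And>m n. m \<le> n \<Longrightarrow> G m \<subseteq> G n"
    and le_M: "\<And>n. gram_norm2 K (G n) h \<le> M"
    and approx: "\<And>n. M - inverse (real (Suc n)) < gram_norm2 K (G n) h"
    and "0 < e"
  shows "\<exists>n0. \<forall>m\<ge>n0. \<forall>n\<ge>n0. N (\<lambda>x. interp K (G m) h x - interp K (G n) h x) < e"
proof -
  have step: "N (\<lambda>x. interp K (G m) h x - interp K (G n) h x) < inverse (real (Suc n))"
    if "n \<le> m" for m n
    using span_norm2_interp_diff[OF G mono[OF that]] le_M[of m] approx[of n] by simp
  obtain n0 where n0: "inverse (real (Suc n0)) < e"
    using reals_Archimedean[OF \<open>0 < e\<close>] by (auto simp: inverse_eq_divide)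
  have "N (\<lambda>x. interp K (G m) h x - interp K (G n) h x) < e" if "n0 \<le> m" "n0 \<le> n" for m n
  proof (cases "n \<le> m")
    case True
    have "inverse (real (Suc n)) \<le> inverse (real (Suc n0))"
      using \<open>n0 \<le> n\<close> by (simp add: field_simps)
    then show ?thesis
      using step[OF True] n0 by linarith
  next
    case False
    have "inverse (real (Suc m)) \<le> inverse (real (Suc n0))"
      using \<open>n0 \<le> m\<close> by (simp add: field_simps)
    then show ?thesis
      using step[of m n] False n0 span_norm2_minus_commute[of "interp K (G m) h" "interp K (G n) h"]
      by linarith
  qed
  then show ?thesis
    by blast
qed

lemma interp_chain_tendsto:
  assumes G: "\<And>n. finite (G n)" and le_M: "\<And>F. finite F \<Longrightarrow> gram_norm2 K F h \<le> M"
    and approx: "\<And>n. M - inverse (real (Suc n)) < gram_norm2 K (G n) h"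
  shows "(\<lambda>n. span_fun K (interp K (G n) h) y) \<longlonglongrightarrow> h y"
proof -
  have bound: "norm (span_fun K (interp K (G n) h) y - h y) \<le> sqrt (Re (K y y) * inverse (real (Suc n)))"
    for n
  proof (rule real_le_rsqrt)
    have "gram_norm2 K (insert y (G n)) h - gram_norm2 K (G n) h \<le> inverse (real (Suc n))"
      using le_M[of "insert y (G n)"] G approx[of n] by simp
    then have "Re (K y y) * (gram_norm2 K (insert y (G n)) h - gram_norm2 K (G n) h)
        \<le> Re (K y y) * inverse (real (Suc n))"
      by (rule mult_left_mono) (rule K_diag_nonneg)
    with interp_pointwise_error[OF G[of n], of h y]
    show "(norm (span_fun K (interp K (G n) h) y - h y))\<^sup>2 \<le> Re (K y y) * inverse (real (Suc n))"
      by simp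
  qed
  have "(\<lambda>n. sqrt (Re (K y y) * inverse (real (Suc n)))) \<longlonglongrightarrow> sqrt (Re (K y y) * 0)"
    by (intro tendsto_intros LIMSEQ_inverse_real_of_nat)
  then have "(\<lambda>n. sqrt (Re (K y y) * inverse (real (Suc n)))) \<longlonglongrightarrow> 0"
    by simp
  then have "(\<lambda>n. span_fun K (interp K (G n) h) y - h y) \<longlonglongrightarrow> 0"
    by (rule Lim_null_comparison[rotated]) (intro always_eventually allI bound)
  then show ?thesis
    by (simp add: LIM_zero_iff)
qed

theorem in_rkhs_if_bdd_above:
  assumes bdd: "bdd_above ((\<lambda>F. gram_norm2 K F h) ` {F. finite F})"
  shows "in_rkhs K h"
proof -
  let ?M = "SUP F\<in>{F. finite F}. gram_norm2 K F h"
  have le_M: "gram_norm2 K F h \<le> ?M" if "finite F" for F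
    using that by (intro cSUP_upper[OF _ bdd]) simp
  obtain G where G: "\<And>n. finite (G n)" and mono: "\<And>m n. m \<le> n \<Longrightarrow> G m \<subseteq> G n"
    and approx: "\<And>n. ?M - inverse (real (Suc n)) < gram_norm2 K (G n) h"
    using finite_chain_approaching_SUP[OF bdd] by blast
  have "approx_seq K (\<lambda>n. interp K (G n) h) h"
    unfolding approx_seq_def
    using fin_supp_interp[OF G] interp_chain_cauchy[OF G mono le_M[OF G] approx]
      interp_chain_tendsto[OF G le_M approx] by blast
  then show ?thesis
    unfolding in_rkhs_def by blast
qed

end

lemma strictly_pd_kernel_if_deltas_in_rkhs:
  assumes "pos_def_kernel K" "\<forall>x. in_rkhs K (delta x)"
  shows "strictly_pd_kernel K"
proof
  show "pos_def_kernel K"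
    by (rule assms(1))
  fix F :: "'a set"
  assume "finite F"
  show "\<forall>c. (\<forall>b\<in>F. mat_vec_on F K c b = 0) \<longrightarrow> (\<forall>a\<in>F. c a = 0)"
    using gram_kernel_vanishes_at_delta[OF assms(1) spec[OF assms(2)] \<open>finite F\<close>] by blast
qed

lemma bdd_above_image_iff_squares:
  fixes f :: "'a \<Rightarrow> real"
  assumes "\<And>x. x \<in> A \<Longrightarrow> 0 \<le> f x"
  shows "bdd_above (f ` A) \<longleftrightarrow> bdd_above ((\<lambda>x. (f x)\<^sup>2) ` A)"
proof
  assume "bdd_above (f ` A)"
  then obtain B where "\<And>x. x \<in> A \<Longrightarrow> f x \<le> B"
    by (auto simp: bdd_above_def)
  then have "(f x)\<^sup>2 \<le> B\<^sup>2" if "x \<in> A" for x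
    using assms that by (simp add: power_mono)
  then show "bdd_above ((\<lambda>x. (f x)\<^sup>2) ` A)"
    by (auto simp: bdd_above_def)
next
  assume "bdd_above ((\<lambda>x. (f x)\<^sup>2) ` A)"
  then obtain B where "\<And>x. x \<in> A \<Longrightarrow> (f x)\<^sup>2 \<le> B"
    by (auto simp: bdd_above_def)
  then have "f x \<le> sqrt B" if "x \<in> A" for x
    using that by (simp add: real_le_rsqrt)
  then show "bdd_above (f ` A)"
    by (auto simp: bdd_above_def)
qed

theorem corollary8p5:
  fixes K :: "'a \<Rightarrow> 'a \<Rightarrow> complex" and h :: "'a \<Rightarrow> complex"
  assumes "pos_def_kernel K"
    and "\<forall>x. in_rkhs K (delta x)"
  shows "(in_rkhs K h \<longleftrightarrow>
            bdd_above {l2_norm_on F (mat_vec_on F (inv_sqrt_on K F) h) | F. finite F})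
       \<and> (in_rkhs K h \<longrightarrow>
            (rkhs_norm K h)\<^sup>2 =
              (SUP F\<in>{F. finite F}. (l2_norm_on F (mat_vec_on F (inv_sqrt_on K F) h))\<^sup>2))"
proof -
  interpret strictly_pd_kernel K
    by (rule strictly_pd_kernel_if_deltas_in_rkhs[OF assms])
  let ?l = "\<lambda>F. l2_norm_on F (mat_vec_on F (inv_sqrt_on K F) h)"
  have l2: "(?l F)\<^sup>2 = gram_norm2 K F h" if "finite F" for F
    using l2_norm_inv_sqrt[OF that] .
  have squares: "(\<lambda>F. (?l F)\<^sup>2) ` {F. finite F} = (\<lambda>F. gram_norm2 K F h) ` {F. finite F}"
    by (rule image_cong) (simp_all add: l2)
  have "bdd_above {?l F | F. finite F} \<longleftrightarrow> bdd_above ((\<lambda>F. (?l F)\<^sup>2) ` {F. finite F})"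
    unfolding setcompr_eq_image by (rule bdd_above_image_iff_squares) (simp add: l2_norm_on_def sum_nonneg)
  also have "\<dots> \<longleftrightarrow> in_rkhs K h"
    unfolding squares using in_rkhs_if_bdd_above rkhs_norm_eq_SUP(1) by (rule iffI)
  moreover have "(SUP F\<in>{F. finite F}. (?l F)\<^sup>2) = (SUP F\<in>{F. finite F}. gram_norm2 K F h)"
    by (simp only: squares)
  ultimately show ?thesis
    using rkhs_norm_eq_SUP(2) by (intro conjI impI) simp_all
qed

end
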